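(* Let $b$ satisfy (b1)–(b4) and $u\in BV(\Omega)\cap L^\infty(\Omega)$. (a) For every Borel $\Lambda\colon\Omega\to[0,1]$ there is a Borel $\lambda\colon\Omega\to[0,1]$ (depending on $u,\Lambda$) with $[b(\cdot,u),Du]_\Lambda=(b(\cdot,u),Du)_\lambda$. (b) For every Borel $\lambda\colon\Omega\to[0,1]$ there exist a Borel $\tilde\Lambda\colon\Omega\to[0,1]$ and a Borel function $R(u)$ on $J_u$ such that $(b(\cdot,u),Du)_\lambda=[b(\cdot,u),Du]_{\tilde\Lambda}+R(u)\,\sigma\llcorner J_u$, where $R(u)(x)=0$ whenever $F(x,u^\lambda(x))$ lies between $F(x,u^-(x))$ and $F(x,u^+(x))$, and in general $|R(u)|\le u^+-u^-$ $\sigma$-a.e. on $J_u$.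
   Context: $\Omega\subseteq\mathbb R^N$ ($N\ge2$) open; $\mathcal{DM}^\infty(\Omega)$ = fields $A\in L^\infty(\Omega;\mathbb R^N)$ with distributional divergence a finite Radon measure. Assumptions on $b\colon\Omega\times\mathbb R\to\mathbb R^N$: (b1) Borel and bounded; (b2) for a.e. $x$, $t\mapsto b(x,t)$ continuous; (b3) $b_t:=b(\cdot,t)\in\mathcal{DM}^\infty(\Omega)$ for all $t$; (b4) $\sigma:=\bigvee_t|\operatorname{div}_xb_t|$ (least upper bound of measures) is a finite Radon measure. $f(\cdot,t)=d\operatorname{div}_xb_t/d\sigma$, $B(x,t)=\int_0^tb(x,s)ds$, $F(x,t)=\int_0^tf(x,s)ds$ (for $\sigma$-a.e. $x$, $F(x,\cdot)$ is 1-Lipschitz). $u^\pm$: approximate upper/lower limits; $J_u$ jump set; $u^\lambda:=(1-\lambda)u^-+\lambda u^+$. $(b(\cdot,u),Du)_\lambda:=-F(x,u^\lambda)\sigma+\operatorname{div}(B(x,u(x)))$; $[b(\cdot,u),Du]_\lambda:=-((1-\lambda)F(x,u^-)+\lambda F(x,u^+))\sigma+\operatorname{div}(B(x,u(x)))$. *)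

theory Defs
  imports "HOL-Analysis.Analysis"
begin

definition smooth_fun :: "('a::euclidean_space \<Rightarrow> real) \<Rightarrow> bool" where
  "smooth_fun \<phi> \<longleftrightarrow>
     (\<exists>S. \<phi> \<in> S \<and> (\<forall>g\<in>S. (\<forall>x. g differentiable (at x)) \<and>
            (\<forall>i\<in>Basis. (\<lambda>x. frechet_derivative g (at x) i) \<in> S)))"

definition partial_der :: "'a::euclidean_space \<Rightarrow> ('a \<Rightarrow> real) \<Rightarrow> 'a \<Rightarrow> real" where
  "partial_der i \<phi> x = frechet_derivative \<phi> (at x) i"

definition grad :: "('a::euclidean_space \<Rightarrow> real) \<Rightarrow> 'a \<Rightarrow> 'a" where
  "grad \<phi> x = (\<Sum>i\<in>Basis. partial_der i \<phi> x *\<^sub>R i)"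

definition test_fun :: "'a::euclidean_space set \<Rightarrow> ('a \<Rightarrow> real) \<Rightarrow> bool" where
  "test_fun \<Omega> \<phi> \<longleftrightarrow> smooth_fun \<phi> \<and> compact (closure {x. \<phi> x \<noteq> 0})
      \<and> closure {x. \<phi> x \<noteq> 0} \<subseteq> \<Omega>"

text \<open>A finite (positive) Borel measure on Omega (automatically Radon).\<close>
definition finite_measure_on :: "'a::euclidean_space set \<Rightarrow> 'a measure \<Rightarrow> bool" where
  "finite_measure_on \<Omega> M \<longleftrightarrow> finite_measure M \<and> sets M = sets borel \<and> emeasure M (UNIV - \<Omega>) = 0"

definition total_variation :: "('a::euclidean_space set \<Rightarrow> real) \<Rightarrow> 'a set \<Rightarrow> ennreal" where
  "total_variation \<mu> E = (SUP P \<in> {P. finite P \<and> disjoint P \<and> \<Union>P = E \<and> P \<subseteq> sets borel}.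
        (\<Sum>A\<in>P. ennreal \<bar>\<mu> A\<bar>))"

definition is_measure_lub :: "'a::euclidean_space set \<Rightarrow> ('a set \<Rightarrow> real) set \<Rightarrow> 'a measure \<Rightarrow> bool" where
  "is_measure_lub \<Omega> M \<sigma> \<longleftrightarrow>
     (\<forall>\<mu>\<in>M. \<forall>E\<in>sets borel. E \<subseteq> \<Omega> \<longrightarrow> total_variation \<mu> E \<le> emeasure \<sigma> E) \<and>
     (\<forall>\<rho>. sets \<rho> = sets borel \<longrightarrow>
        (\<forall>\<mu>\<in>M. \<forall>E\<in>sets borel. E \<subseteq> \<Omega> \<longrightarrow> total_variation \<mu> E \<le> emeasure \<rho> E) \<longrightarrow>
        (\<forall>E\<in>sets borel. E \<subseteq> \<Omega> \<longrightarrow> emeasure \<sigma> E \<le> emeasure \<rho> E))"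

text \<open>u in BV(Omega): u in L^1(Omega) and each distributional partial derivative
  is a finite signed Radon measure (difference of two finite Borel measures on Omega).\<close>
definition BV_on :: "'a::euclidean_space set \<Rightarrow> ('a \<Rightarrow> real) \<Rightarrow> bool" where
  "BV_on \<Omega> u \<longleftrightarrow> set_integrable lebesgue \<Omega> u \<and>
     (\<forall>i\<in>Basis. \<exists>P N. finite_measure_on \<Omega> P \<and> finite_measure_on \<Omega> N \<and>
        (\<forall>\<phi>. test_fun \<Omega> \<phi> \<longrightarrow>
           (LINT x:\<Omega>|lebesgue. u x * partial_der i \<phi> x) = - ((\<integral>x. \<phi> x \<partial>P) - (\<integral>x. \<phi> x \<partial>N))))"

definition Linfty_on :: "'a::euclidean_space set \<Rightarrow> ('a \<Rightarrow> real) \<Rightarrow> bool" where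
  "Linfty_on \<Omega> u \<longleftrightarrow> u \<in> borel_measurable (restrict_space lebesgue \<Omega>) \<and>
     (\<exists>M. AE x in lebesgue. x \<in> \<Omega> \<longrightarrow> \<bar>u x\<bar> \<le> M)"

definition ap_upper :: "'a::euclidean_space set \<Rightarrow> ('a \<Rightarrow> real) \<Rightarrow> 'a \<Rightarrow> real" where
  "ap_upper \<Omega> u x = Inf {t. ((\<lambda>r. measure lebesgue ({y\<in>\<Omega>. u y > t} \<inter> ball x r)
                                  / measure lebesgue (ball x r)) \<longlongrightarrow> 0) (at_right 0)}"

definition ap_lower :: "'a::euclidean_space set \<Rightarrow> ('a \<Rightarrow> real) \<Rightarrow> 'a \<Rightarrow> real" where
  "ap_lower \<Omega> u x = Sup {t. ((\<lambda>r. measure lebesgue ({y\<in>\<Omega>. u y < t} \<inter> ball x r)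
                                  / measure lebesgue (ball x r)) \<longlongrightarrow> 0) (at_right 0)}"

definition jump_set :: "'a::euclidean_space set \<Rightarrow> ('a \<Rightarrow> real) \<Rightarrow> 'a set" where
  "jump_set \<Omega> u = {x\<in>\<Omega>. ap_lower \<Omega> u x < ap_upper \<Omega> u x}"

definition u_interp :: "'a::euclidean_space set \<Rightarrow> ('a \<Rightarrow> real) \<Rightarrow> ('a \<Rightarrow> real) \<Rightarrow> 'a \<Rightarrow> real" where
  "u_interp \<Omega> u lam x = (1 - lam x) * ap_lower \<Omega> u x + lam x * ap_upper \<Omega> u x"

definition Fprim :: "('a \<Rightarrow> real \<Rightarrow> real) \<Rightarrow> 'a \<Rightarrow> real \<Rightarrow> real" where
  "Fprim f x t = (LBINT s=0..t. f x s)"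

definition Bprim :: "('a \<Rightarrow> real \<Rightarrow> 'a::euclidean_space) \<Rightarrow> 'a \<Rightarrow> real \<Rightarrow> 'a" where
  "Bprim b x t = (LBINT s=0..t. b x s)"

definition div_Bu :: "'a::euclidean_space set \<Rightarrow> ('a \<Rightarrow> real \<Rightarrow> 'a) \<Rightarrow> ('a \<Rightarrow> real) \<Rightarrow> ('a \<Rightarrow> real) \<Rightarrow> real" where
  "div_Bu \<Omega> b u \<phi> = - (LINT x:\<Omega>|lebesgue. Bprim b x (u x) \<bullet> grad \<phi> x)"

definition pairing_paren ::
  "'a::euclidean_space set \<Rightarrow> ('a \<Rightarrow> real \<Rightarrow> 'a) \<Rightarrow> ('a \<Rightarrow> real \<Rightarrow> real) \<Rightarrow> 'a measure
     \<Rightarrow> ('a \<Rightarrow> real) \<Rightarrow> ('a \<Rightarrow> real) \<Rightarrow> ('a \<Rightarrow> real) \<Rightarrow> real" where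
  "pairing_paren \<Omega> b f \<sigma> u lam \<phi> =
     (\<integral>x. \<phi> x * (- Fprim f x (u_interp \<Omega> u lam x)) \<partial>\<sigma>) + div_Bu \<Omega> b u \<phi>"

definition pairing_brack ::
  "'a::euclidean_space set \<Rightarrow> ('a \<Rightarrow> real \<Rightarrow> 'a) \<Rightarrow> ('a \<Rightarrow> real \<Rightarrow> real) \<Rightarrow> 'a measure
     \<Rightarrow> ('a \<Rightarrow> real) \<Rightarrow> ('a \<Rightarrow> real) \<Rightarrow> ('a \<Rightarrow> real) \<Rightarrow> real" where
  "pairing_brack \<Omega> b f \<sigma> u \<Lambda> \<phi> =
     (\<integral>x. \<phi> x * (- ((1 - \<Lambda> x) * Fprim f x (ap_lower \<Omega> u x)
                      + \<Lambda> x * Fprim f x (ap_upper \<Omega> u x))) \<partial>\<sigma>) + div_Bu \<Omega> b u \<phi>"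

definition borel_01_on :: "'a::euclidean_space set \<Rightarrow> ('a \<Rightarrow> real) \<Rightarrow> bool" where
  "borel_01_on \<Omega> g \<longleftrightarrow> g \<in> borel_measurable (restrict_space borel \<Omega>) \<and> (\<forall>x\<in>\<Omega>. 0 \<le> g x \<and> g x \<le> 1)"

end

(*
  For \<sigma>-a.e. x the primitive F(x, .) is 1-Lipschitz: by (b4), |\<integral>\<^sub>E f(., t) d\<sigma>| \<le> \<sigma>(E) for
  every Borel E, so |f(., t)| \<le> 1 \<sigma>-a.e. for each t, and Fubini turns this into a bound for
  a.e. t at \<sigma>-a.e. x. Both pairings contain the same term div(B(x, u(x))), so each identity
  reduces to a pointwise relation between F(x, u\<^sup>\<lambda>) and (1 - \<Lambda>) F(x, u\<^sup>-) + \<Lambda> F(x, u\<^sup>+).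

  (a) s \<mapsto> F(x, u\<^sup>s) is continuous on [0, 1] with the values F(x, u\<^sup>-) and F(x, u\<^sup>+) at the
  endpoints, so it attains every convex combination of them; the least such s is a Borel
  function of x, because the defining condition can be tested at rational s.

  (b) Where F(x, u\<^sup>\<lambda>) lies between F(x, u\<^sup>-) and F(x, u\<^sup>+), \<Lambda>' is the matching convex coefficient;
  elsewhere \<Lambda>' = 0, and the remainder F(x, u\<^sup>-) - F(x, u\<^sup>\<lambda>) is at most \<lambda> (u\<^sup>+ - u\<^sup>-) by the
  Lipschitz bound.

  Borel measurability of u\<^sup>\<plusminus> comes from writing them through Lebesgue densities of superlevel
  sets, evaluated along dyadic radii.
*)
theory Submission
  imports Defs
begin

section \<open>Lebesgue density at a point\<close>

definition ball_density :: "'a::euclidean_space set \<Rightarrow> 'a \<Rightarrow> real \<Rightarrow> real" where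
  "ball_density E x r = measure lebesgue (E \<inter> ball x r) / measure lebesgue (ball x r)"

definition density_zero :: "'a::euclidean_space set \<Rightarrow> 'a \<Rightarrow> bool" where
  "density_zero E x \<longleftrightarrow> (ball_density E x \<longlongrightarrow> 0) (at_right 0)"

lemma measure_lebesgue_ball:
  fixes x :: "'a::euclidean_space"
  shows "measure lebesgue (ball x r) = (if 0 \<le> r then unit_ball_vol (DIM('a)) * r ^ DIM('a) else 0)"
  using content_ball[of r x] by simp

lemma ball_density_nonneg: "0 \<le> ball_density E x r"
  unfolding ball_density_def by simp

lemma lebesgue_Int_ball_fmeasurable:
  fixes x :: "'a::euclidean_space"
  shows "E \<in> sets lebesgue \<Longrightarrow> E \<inter> ball x r \<in> fmeasurable lebesgue"
  by (intro bounded_set_imp_lmeasurable) (auto intro: bounded_subset[OF bounded_ball])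

lemma lebesgue_set_ex_borel_representative:
  assumes "E \<in> sets lebesgue"
  obtains E' where "E' \<in> sets borel"
    "\<And>B. B \<in> sets borel \<Longrightarrow> measure lebesgue (E \<inter> B) = measure lborel (E' \<inter> B)"
proof -
  let ?m = "main_part lborel E" and ?n = "null_part lborel E"
  obtain N where N: "N \<in> null_sets lborel" "?n \<subseteq> N"
    using null_part[OF assms] by blast
  have m: "?m \<in> sets lborel" by (rule main_part_sets[OF assms])
  show ?thesis
  proof (rule that)
    show "?m \<in> sets borel" using m by simp
    fix B :: "'a set" assume B: "B \<in> sets borel"
    have mB: "?m \<inter> B \<in> sets lborel" using m B by simp
    have nB: "?n \<inter> B \<in> null_sets lebesgue"
      by (rule null_sets_completion_subset[OF _ null_sets_completionI[OF N(1)]]) (use N(2) in blast)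
    have "E \<inter> B = (?m \<inter> B) \<union> (?n \<inter> B)"
      using main_part_null_part_Un[OF assms] by blast
    then have "measure lebesgue (E \<inter> B) = measure lebesgue (?m \<inter> B)"
      using mB nB by (simp add: measure_Un_null_set)
    also have "\<dots> = measure lborel (?m \<inter> B)" using mB by simp
    finally show "measure lebesgue (E \<inter> B) = measure lborel (?m \<inter> B)" .
  qed
qed

lemma ball_density_borel_measurable:
  fixes E :: "'a::euclidean_space set"
  assumes "E \<in> sets lebesgue"
  shows "(\<lambda>x. ball_density E x r) \<in> borel_measurable borel"
proof -
  obtain E' where E': "E' \<in> sets borel"
    "\<And>B. B \<in> sets borel \<Longrightarrow> measure lebesgue (E \<inter> B) = measure lborel (E' \<inter> B)"
    using lebesgue_set_ex_borel_representative[OF assms] by blast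
  have "{p \<in> space (borel \<Otimes>\<^sub>M lborel). snd p \<in> E' \<inter> ball (fst p) r}
      = {p \<in> space (borel \<Otimes>\<^sub>M (borel::'a measure)). snd p \<in> E'} \<inter> {p. dist (fst p) (snd p) < r}"
    by (auto simp: space_pair_measure)
  also have "\<dots> \<in> sets (borel \<Otimes>\<^sub>M (borel::'a measure))"
  proof (rule sets.Int)
    show "{p \<in> space (borel \<Otimes>\<^sub>M (borel::'a measure)). snd p \<in> E'} \<in> sets (borel \<Otimes>\<^sub>M borel)"
      using E' by measurable
    have "open {p::'a \<times> 'a. dist (fst p) (snd p) < r}"
      by (intro open_Collect_less continuous_intros)
    then show "{p::'a \<times> 'a. dist (fst p) (snd p) < r} \<in> sets (borel \<Otimes>\<^sub>M borel)"
      by (subst borel_prod) (rule borel_open)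
  qed
  finally have "(\<lambda>x. measure lborel (E' \<inter> ball x r)) \<in> borel_measurable borel"
    by (intro lborel.measurable_measure) (auto cong: sets_pair_measure_cong)
  then show ?thesis
    unfolding ball_density_def E'(2)[OF borel_open[OF open_ball]] measure_lebesgue_ball
    by measurable
qed

lemma ball_density_doubling:
  fixes x :: "'a::euclidean_space"
  assumes E: "E \<in> sets lebesgue" and r: "0 < r" "r \<le> \<rho>" "\<rho> \<le> 2 * r"
  shows "ball_density E x r \<le> 2 ^ DIM('a) * ball_density E x \<rho>"
proof -
  define c where "c = unit_ball_vol (DIM('a))"
  have c: "c > 0" unfolding c_def by simp
  have N: "measure lebesgue (E \<inter> ball x r) \<le> measure lebesgue (E \<inter> ball x \<rho>)"
    using r E by (intro measure_mono_fmeasurable lebesgue_Int_ball_fmeasurable) auto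
  have rr: "(\<rho> / 2) ^ DIM('a) \<le> r ^ DIM('a)"
    using r by (intro power_mono) auto
  have "ball_density E x r = measure lebesgue (E \<inter> ball x r) / (c * r ^ DIM('a))"
    unfolding ball_density_def c_def measure_lebesgue_ball using r by simp
  also have "\<dots> \<le> measure lebesgue (E \<inter> ball x \<rho>) / (c * (\<rho> / 2) ^ DIM('a))"
    using N c r rr by (intro frac_le mult_left_mono) auto
  also have "\<dots> = 2 ^ DIM('a) * ball_density E x \<rho>"
    unfolding ball_density_def c_def measure_lebesgue_ball using c r
    by (simp add: power_divide c_def)
  finally show ?thesis .
qed

lemma power_half_bracket:
  fixes y :: real
  assumes "0 < y" "y < (1/2) ^ K"
  obtains k where "K \<le> k" "(1/2) ^ Suc k < y" "y \<le> (1/2) ^ k"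
proof -
  have ex: "\<exists>j. (1/2::real) ^ j < y" using real_arch_pow_inv[of y "1/2"] assms by auto
  define j where "j = (LEAST j. (1/2::real) ^ j < y)"
  have j: "(1/2::real) ^ j < y" unfolding j_def by (rule LeastI_ex[OF ex])
  have "K < j"
  proof (rule ccontr)
    assume "\<not> K < j"
    then have "(1/2::real) ^ K \<le> (1/2) ^ j" by (intro power_decreasing) auto
    then show False using j assms by linarith
  qed
  then obtain k where k: "j = Suc k" by (cases j) auto
  have "k < j" using k by simp
  then have "\<not> (1/2::real) ^ k < y" unfolding j_def by (rule not_less_Least)
  then show ?thesis using that[of k] \<open>K < j\<close> j k by simp
qed

text \<open>Radii between \<open>2\<^sup>-\<^sup>k\<^sup>-\<^sup>1\<close> and \<open>2\<^sup>-\<^sup>k\<close> are handled by the doubling estimate.\<close>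

lemma density_zero_iff_dyadic:
  fixes x :: "'a::euclidean_space"
  assumes E: "E \<in> sets lebesgue"
  shows "density_zero E x \<longleftrightarrow> (\<lambda>k. ball_density E x ((1/2) ^ k)) \<longlonglongrightarrow> 0"
  unfolding density_zero_def
proof
  assume "(ball_density E x \<longlongrightarrow> 0) (at_right 0)"
  moreover have "filterlim (\<lambda>k. (1/2::real) ^ k) (at_right 0) sequentially"
    by (rule tendsto_imp_filterlim_at_right) (auto intro!: LIMSEQ_power_zero)
  ultimately show "(\<lambda>k. ball_density E x ((1/2) ^ k)) \<longlonglongrightarrow> 0"
    by (rule filterlim_compose)
next
  assume L: "(\<lambda>k. ball_density E x ((1/2) ^ k)) \<longlonglongrightarrow> 0"
  show "(ball_density E x \<longlongrightarrow> 0) (at_right 0)"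
    unfolding tendsto_iff eventually_at_right_field
  proof (intro allI impI)
    fix e :: real assume "e > 0"
    then obtain K where K: "\<And>k. K \<le> k \<Longrightarrow> ball_density E x ((1/2) ^ k) < e / 2 ^ DIM('a)"
      using L ball_density_nonneg unfolding LIMSEQ_iff
      by (metis divide_pos_pos real_norm_def zero_less_numeral zero_less_power abs_of_nonneg diff_zero)
    show "\<exists>b>0. \<forall>y>0. y < b \<longrightarrow> dist (ball_density E x y) 0 < e"
    proof (intro exI[of _ "(1/2) ^ K"] conjI allI impI)
      fix y :: real assume y: "0 < y" "y < (1/2) ^ K"
      then obtain k where k: "K \<le> k" "(1/2) ^ Suc k < y" "y \<le> (1/2) ^ k"
        by (rule power_half_bracket)
      have "ball_density E x y \<le> 2 ^ DIM('a) * ball_density E x ((1/2) ^ k)"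
        using k y by (intro ball_density_doubling E) auto
      also have "\<dots> < e"
        using K[OF k(1)] by (simp add: field_simps)
      finally show "dist (ball_density E x y) 0 < e"
        using ball_density_nonneg[of E x y] by simp
    qed simp
  qed
qed

lemma density_zero_set_borel:
  fixes E :: "'a::euclidean_space set"
  assumes E: "E \<in> sets lebesgue"
  shows "{x. density_zero E x} \<in> sets borel"
proof -
  have [measurable]: "(\<lambda>x. ball_density E x r) \<in> borel_measurable borel" for r
    by (rule ball_density_borel_measurable[OF E])
  have "{x. density_zero E x} = {x \<in> space borel. (\<lambda>k. ball_density E x ((1/2) ^ k)) \<longlonglongrightarrow> 0}"
    by (simp add: density_zero_iff_dyadic[OF E])
  also have "\<dots> \<in> sets borel" by measurable
  finally show ?thesis .
qed

lemma density_zero_subset: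
  assumes "density_zero E x" "E' \<subseteq> E" "E \<in> sets lebesgue" "E' \<in> sets lebesgue"
  shows "density_zero E' x"
  unfolding density_zero_def
proof (rule tendsto_sandwich[of "\<lambda>_. 0" _ _ "ball_density E x"])
  have "measure lebesgue (E' \<inter> ball x r) \<le> measure lebesgue (E \<inter> ball x r)" for r
    using assms(2-4) by (intro measure_mono_fmeasurable lebesgue_Int_ball_fmeasurable) auto
  then show "\<forall>\<^sub>F r in at_right 0. ball_density E' x r \<le> ball_density E x r"
    unfolding ball_density_def by (intro always_eventually allI divide_right_mono) auto
qed (use assms(1) in \<open>auto simp: density_zero_def ball_density_nonneg\<close>)

lemma density_zero_null_set: "E \<in> null_sets lebesgue \<Longrightarrow> density_zero E x"
proof -
  assume "E \<in> null_sets lebesgue"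
  then have "E \<inter> ball x r \<in> null_sets lebesgue" for r
    by (rule null_set_Int2) auto
  then have "ball_density E x = (\<lambda>_. 0)"
    by (auto simp: ball_density_def measure_def null_setsD1)
  then show "density_zero E x" by (simp add: density_zero_def)
qed

text \<open>The two densities add up to at least \<open>1\<close> on small balls.\<close>

lemma not_density_zero_cover:
  fixes x :: "'a::euclidean_space"
  assumes "open \<Omega>" "x \<in> \<Omega>" "E1 \<in> sets lebesgue" "E2 \<in> sets lebesgue" "\<Omega> \<subseteq> E1 \<union> E2"
  shows "\<not> (density_zero E1 x \<and> density_zero E2 x)"
proof
  assume "density_zero E1 x \<and> density_zero E2 x"
  then have "((\<lambda>r. ball_density E1 x r + ball_density E2 x r) \<longlongrightarrow> 0 + 0) (at_right 0)"
    unfolding density_zero_def by (intro tendsto_add) auto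
  moreover obtain d where d: "d > 0" "ball x d \<subseteq> \<Omega>"
    using assms(1,2) open_contains_ball by blast
  have "eventually (\<lambda>r. 1 \<le> ball_density E1 x r + ball_density E2 x r) (at_right 0)"
    unfolding eventually_at_right_field
  proof (intro exI[of _ d] conjI allI impI)
    fix r :: real assume r: "0 < r" "r < d"
    then have "ball x r \<subseteq> \<Omega>"
      using d subset_ball[of r d x] by simp
    then have "ball x r \<subseteq> (E1 \<inter> ball x r) \<union> (E2 \<inter> ball x r)"
      using assms(5) by auto
    then have "measure lebesgue (ball x r) \<le> measure lebesgue ((E1 \<inter> ball x r) \<union> (E2 \<inter> ball x r))"
      using assms(3,4) by (intro measure_mono_fmeasurable fmeasurable.Un lebesgue_Int_ball_fmeasurable) auto
    also have "\<dots> \<le> measure lebesgue (E1 \<inter> ball x r) + measure lebesgue (E2 \<inter> ball x r)"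
      using assms(3,4) by (intro measure_Un_le) auto
    finally show "1 \<le> ball_density E1 x r + ball_density E2 x r"
      using r unfolding ball_density_def
      by (simp add: add_divide_distrib[symmetric] le_divide_eq measure_lebesgue_ball)
  qed (use d in simp)
  ultimately show False
    using tendsto_lowerbound by fastforce
qed

section \<open>Approximate upper and lower limits\<close>

lemma superlevel_set_lebesgue:
  fixes u :: "'a::euclidean_space \<Rightarrow> real"
  assumes "\<Omega> \<in> sets lebesgue" "u \<in> borel_measurable (restrict_space lebesgue \<Omega>)"
  shows "{y\<in>\<Omega>. t < u y} \<in> sets lebesgue"
proof -
  have "{y \<in> space (restrict_space lebesgue \<Omega>). t < u y} \<in> sets (restrict_space lebesgue \<Omega>)"
    using borel_measurable_iff_greater[THEN iffD1, OF assms(2)] by blast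
  then show ?thesis
    using assms(1) by (simp add: sets_restrict_space_iff space_restrict_space)
qed

lemma ap_upper_eq_Inf_density_zero:
  "ap_upper \<Omega> u x = Inf {t. density_zero {y\<in>\<Omega>. t < u y} x}"
  unfolding ap_upper_def density_zero_def ball_density_def[abs_def] by simp

lemma ap_lower_eq_uminus_ap_upper: "ap_lower \<Omega> u x = - ap_upper \<Omega> (\<lambda>y. - u y) x"
proof -
  define P where "P t \<longleftrightarrow> ((\<lambda>r. measure lebesgue ({y\<in>\<Omega>. u y < t} \<inter> ball x r)
    / measure lebesgue (ball x r)) \<longlongrightarrow> 0) (at_right 0)" for t
  have "{y\<in>\<Omega>. t < - u y} = {y\<in>\<Omega>. u y < - t}" for t by auto
  then have "ap_upper \<Omega> (\<lambda>y. - u y) x = Inf {t. P (- t)}"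
    unfolding ap_upper_def P_def by simp
  also have "{t. P (- t)} = uminus ` {t. P t}"
    by (auto simp: image_iff) (metis minus_minus)
  also have "Inf (uminus ` {t. P t}) = - Sup {t. P t}"
    unfolding Inf_real_def by (simp add: image_image)
  finally show ?thesis unfolding ap_lower_def P_def by simp
qed

locale bounded_measurable_on_open =
  fixes \<Omega> :: "'a::euclidean_space set" and u :: "'a \<Rightarrow> real" and M :: real
  assumes open_\<Omega>: "open \<Omega>"
    and u_measurable: "u \<in> borel_measurable (restrict_space lebesgue \<Omega>)"
    and u_bounded: "AE x in lebesgue. x \<in> \<Omega> \<longrightarrow> \<bar>u x\<bar> \<le> M"
begin

lemma \<Omega>_lebesgue: "\<Omega> \<in> sets lebesgue"
  using open_\<Omega> by simp

lemma superlevel_lebesgue: "{y\<in>\<Omega>. t < u y} \<in> sets lebesgue"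
  by (rule superlevel_set_lebesgue[OF \<Omega>_lebesgue u_measurable])

lemma bounded_measurable_on_open_uminus: "bounded_measurable_on_open \<Omega> (\<lambda>y. - u y) M"
  using open_\<Omega> u_measurable u_bounded by unfold_locales auto

lemma density_zero_superlevel_mono:
  assumes "t \<le> t'" "density_zero {y\<in>\<Omega>. t < u y} x"
  shows "density_zero {y\<in>\<Omega>. t' < u y} x"
  using assms(1) by (intro density_zero_subset[OF assms(2)] superlevel_lebesgue) auto

lemma bound_exceptions_null:
  obtains N where "N \<in> null_sets lebesgue" "{x\<in>\<Omega>. M < \<bar>u x\<bar>} \<subseteq> N"
proof -
  obtain N where "N \<in> null_sets lebesgue" "{x \<in> space lebesgue. \<not> (x \<in> \<Omega> \<longrightarrow> \<bar>u x\<bar> \<le> M)} \<subseteq> N"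
    using u_bounded unfolding eventually_ae_filter by blast
  then show ?thesis using that by force
qed

lemma density_zero_superlevel_above_bound:
  assumes "M \<le> t"
  shows "density_zero {y\<in>\<Omega>. t < u y} x"
proof (rule density_zero_null_set)
  obtain N where N: "N \<in> null_sets lebesgue" "{x\<in>\<Omega>. M < \<bar>u x\<bar>} \<subseteq> N"
    by (rule bound_exceptions_null)
  then have "{y\<in>\<Omega>. t < u y} \<subseteq> N" using assms by force
  then show "{y\<in>\<Omega>. t < u y} \<in> null_sets lebesgue"
    using null_sets_subset[OF N(1) superlevel_lebesgue] by blast
qed

lemma not_density_zero_superlevel_below_bound:
  assumes "x \<in> \<Omega>" "t < - M"
  shows "\<not> density_zero {y\<in>\<Omega>. t < u y} x"
proof -
  obtain N where N: "N \<in> null_sets lebesgue" "{x\<in>\<Omega>. M < \<bar>u x\<bar>} \<subseteq> N"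
    by (rule bound_exceptions_null)
  have "\<Omega> - {y\<in>\<Omega>. t < u y} \<subseteq> N" using N(2) assms(2) by force
  then have "\<Omega> - {y\<in>\<Omega>. t < u y} \<in> null_sets lebesgue"
    using null_sets_subset[OF N(1)] \<Omega>_lebesgue superlevel_lebesgue by blast
  then have "density_zero (\<Omega> - {y\<in>\<Omega>. t < u y}) x"
    by (rule density_zero_null_set)
  then show ?thesis
    using not_density_zero_cover[OF open_\<Omega> assms(1) superlevel_lebesgue, of "\<Omega> - {y\<in>\<Omega>. t < u y}"]
      \<Omega>_lebesgue superlevel_lebesgue by blast
qed

lemma ap_upper_bounds:
  assumes x: "x \<in> \<Omega>"
  shows "- M \<le> ap_upper \<Omega> u x \<and> ap_upper \<Omega> u x \<le> M"
proof -
  let ?S = "{t. density_zero {y\<in>\<Omega>. t < u y} x}"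
  have M: "M \<in> ?S" using density_zero_superlevel_above_bound by simp
  have lower: "- M \<le> t" if "t \<in> ?S" for t
    using not_density_zero_superlevel_below_bound[OF x, of t] that by force
  have "ap_upper \<Omega> u x \<le> M"
    unfolding ap_upper_eq_Inf_density_zero using M lower by (intro cInf_lower bdd_belowI) auto
  moreover have "- M \<le> ap_upper \<Omega> u x"
    unfolding ap_upper_eq_Inf_density_zero using M lower by (intro cInf_greatest) auto
  ultimately show ?thesis by simp
qed

lemma ap_upper_less_iff_rational:
  assumes x: "x \<in> \<Omega>"
  shows "ap_upper \<Omega> u x < a \<longleftrightarrow> (\<exists>q\<in>\<rat>. q < a \<and> density_zero {y\<in>\<Omega>. q < u y} x)"
proof
  assume "ap_upper \<Omega> u x < a"
  then obtain t where t: "density_zero {y\<in>\<Omega>. t < u y} x" "t < a"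
    unfolding ap_upper_eq_Inf_density_zero
    using cInf_lessD[of "{t. density_zero {y\<in>\<Omega>. t < u y} x}"] density_zero_superlevel_above_bound
    by blast
  moreover obtain q where "q \<in> \<rat>" "t < q" "q < a"
    using Rats_dense_in_real[OF t(2)] by blast
  ultimately show "\<exists>q\<in>\<rat>. q < a \<and> density_zero {y\<in>\<Omega>. q < u y} x"
    using density_zero_superlevel_mono[of t q] by auto
next
  assume "\<exists>q\<in>\<rat>. q < a \<and> density_zero {y\<in>\<Omega>. q < u y} x"
  then obtain q where q: "q < a" "density_zero {y\<in>\<Omega>. q < u y} x" by blast
  have "ap_upper \<Omega> u x \<le> q"
    unfolding ap_upper_eq_Inf_density_zero
    using q not_density_zero_superlevel_below_bound[OF x]
    by (intro cInf_lower bdd_belowI[of _ "- M"]) (auto simp: not_less[symmetric])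
  with q show "ap_upper \<Omega> u x < a" by simp
qed

lemma ap_upper_borel_measurable: "ap_upper \<Omega> u \<in> borel_measurable (restrict_space borel \<Omega>)"
proof (unfold borel_measurable_iff_less, intro allI)
  fix a :: real
  define A where "A = (\<Union>q\<in>{q\<in>\<rat>. q < a}. {x. density_zero {y\<in>\<Omega>. q < u y} x})"
  have "A \<in> sets borel" unfolding A_def
    by (intro sets.countable_UN'' countable_subset[OF _ countable_rat] density_zero_set_borel
        superlevel_lebesgue) auto
  moreover have "{w \<in> space (restrict_space borel \<Omega>). ap_upper \<Omega> u w < a} = \<Omega> \<inter> A"
    using ap_upper_less_iff_rational by (auto simp: space_restrict_space A_def)
  ultimately show "{w \<in> space (restrict_space borel \<Omega>). ap_upper \<Omega> u w < a} \<in> sets (restrict_space borel \<Omega>)"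
    using open_\<Omega> by (auto simp: sets_restrict_space_iff)
qed

text \<open>If \<open>u\<^sup>- (x) > u\<^sup>+ (x)\<close>, a level strictly between them splits a neighbourhood of \<open>x\<close>
  into two sets of density zero at \<open>x\<close>.\<close>

lemma ap_lower_le_ap_upper:
  assumes x: "x \<in> \<Omega>"
  shows "ap_lower \<Omega> u x \<le> ap_upper \<Omega> u x"
proof -
  interpret neg: bounded_measurable_on_open \<Omega> "\<lambda>y. - u y" M by (rule bounded_measurable_on_open_uminus)
  let ?S = "{t. density_zero {y\<in>\<Omega>. t < u y} x}"
  let ?S' = "{t. density_zero {y\<in>\<Omega>. t < - u y} x}"
  have "- t \<le> t'" if "t \<in> ?S" "t' \<in> ?S'" for t t'
  proof (rule ccontr)
    assume "\<not> - t \<le> t'"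
    then have "\<Omega> \<subseteq> {y\<in>\<Omega>. t < u y} \<union> {y\<in>\<Omega>. t' < - u y}" by auto
    then show False
      using not_density_zero_cover[OF open_\<Omega> x superlevel_lebesgue neg.superlevel_lebesgue] that
      by auto
  qed
  moreover have "?S \<noteq> {}" "?S' \<noteq> {}"
    using density_zero_superlevel_above_bound[of M] neg.density_zero_superlevel_above_bound[of M]
    by auto
  ultimately have "- Inf ?S' \<le> Inf ?S"
    by (metis (no_types, lifting) cInf_greatest minus_le_iff)
  then show ?thesis
    unfolding ap_lower_eq_uminus_ap_upper ap_upper_eq_Inf_density_zero by simp
qed

lemma ap_lower_bounds: "x \<in> \<Omega> \<Longrightarrow> - M \<le> ap_lower \<Omega> u x \<and> ap_lower \<Omega> u x \<le> M"
  using bounded_measurable_on_open.ap_upper_bounds[OF bounded_measurable_on_open_uminus]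
  unfolding ap_lower_eq_uminus_ap_upper by force

lemma ap_lower_borel_measurable: "ap_lower \<Omega> u \<in> borel_measurable (restrict_space borel \<Omega>)"
  using bounded_measurable_on_open.ap_upper_borel_measurable[OF bounded_measurable_on_open_uminus]
  unfolding ap_lower_eq_uminus_ap_upper[abs_def] by measurable

end

section \<open>The primitive \<open>F\<close> and its Lipschitz bound\<close>

lemma Fprim_zero: "Fprim f x 0 = 0"
  by (simp add: Fprim_def zero_ereal_def)

lemma Fprim_lipschitz:
  fixes f :: "'a \<Rightarrow> real \<Rightarrow> real"
  assumes meas: "f x \<in> borel_measurable lborel" and bound: "AE s in lborel. \<bar>f x s\<bar> \<le> 1"
  shows "1-lipschitz_on UNIV (Fprim f x)"
proof (rule lipschitz_onI)
  have one: "set_integrable lborel A (\<lambda>_. 1::real)" if "A \<in> sets borel" "bounded A" for A :: "real set"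
    using emeasure_bounded_finite[OF that(2)] that(1) by (simp add: set_integrable_def)
  have integrable: "set_integrable lborel A (f x)" if "A \<in> sets borel" "bounded A" for A
    by (rule set_integrable_bound[OF one[OF that]]) (use that meas bound in \<open>auto simp: set_borel_measurable_def\<close>)
  have "interval_lebesgue_integrable lborel (ereal c) (ereal d) (f x)" for c d
    by (auto simp: interval_lebesgue_integrable_def intro!: integrable)
  then have sum: "Fprim f x a + (LBINT s=a..b. f x s) = Fprim f x b" for a b
    unfolding Fprim_def zero_ereal_def[symmetric]
    by (intro interval_integral_sum) (auto simp: min_def max_def zero_ereal_def)
  have Icc: "\<bar>LBINT s=c..d. f x s\<bar> \<le> d - c" if "c \<le> d" for c d
  proof -
    have "\<bar>LBINT s=c..d. f x s\<bar> = \<bar>LINT s:{c..d}|lborel. f x s\<bar>"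
      using that by (simp add: interval_integral_Icc)
    also have "\<dots> \<le> (LINT s:{c..d}|lborel. \<bar>f x s\<bar>)"
      using set_integral_norm_bound[OF integrable] by simp
    also have "\<dots> \<le> (LINT s:{c..d}|lborel. 1)"
      using bound
      by (intro set_integral_mono_AE set_integrable_abs integrable one) (auto elim!: eventually_mono)
    also have "\<dots> = d - c" using that by (simp add: set_integral_const)
    finally show ?thesis .
  qed
  fix a b :: real
  have "\<bar>LBINT s=a..b. f x s\<bar> \<le> \<bar>b - a\<bar>"
    using Icc[of a b] Icc[of b a] interval_integral_endpoints_reverse[of a b "f x"]
    by (cases "a \<le> b") auto
  then show "dist (Fprim f x a) (Fprim f x b) \<le> 1 * dist a b"
    using sum[of a b] by (simp add: dist_real_def abs_minus_commute)
qed simp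

lemma Fprim_borel_measurable:
  fixes f :: "'a::euclidean_space \<Rightarrow> real \<Rightarrow> real"
  assumes \<Omega>: "\<Omega> \<in> sets borel"
    and f: "(\<lambda>(x,t). f x t) \<in> borel_measurable (restrict_space borel (\<Omega> \<times> (UNIV::real set)))"
    and g: "g \<in> borel_measurable (restrict_space borel \<Omega>)"
  shows "(\<lambda>x. Fprim f x (g x)) \<in> borel_measurable (restrict_space borel \<Omega>)"
proof -
  define f' where "f' p = indicator (\<Omega> \<times> UNIV) p *\<^sub>R (case p of (x,t) \<Rightarrow> f x t)" for p :: "'a \<times> real"
  have "\<Omega> \<times> (UNIV::real set) \<in> sets borel"
    using \<Omega> by (subst borel_prod[symmetric]) (intro pair_measureI, auto)
  then have "f' \<in> borel_measurable borel"
    unfolding f'_def[abs_def] using borel_measurable_restrict_space_iff f by blast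
  then have [measurable]: "f' \<in> borel_measurable (borel \<Otimes>\<^sub>M borel)"
    by (simp add: borel_prod)
  define G where "G p = (if 0 \<le> snd p then (\<integral>s. (if 0 < s \<and> s < snd p then f' (fst p, s) else 0) \<partial>lborel)
      else - (\<integral>s. (if snd p < s \<and> s < 0 then f' (fst p, s) else 0) \<partial>lborel))" for p :: "'a \<times> real"
  have "(\<lambda>p. \<integral>s. (if 0 < s \<and> s < snd p then f' (fst p, s) else 0) \<partial>lborel)
      \<in> borel_measurable (borel \<Otimes>\<^sub>M lborel)"
    "(\<lambda>p. \<integral>s. (if snd p < s \<and> s < 0 then f' (fst p, s) else 0) \<partial>lborel)
      \<in> borel_measurable (borel \<Otimes>\<^sub>M lborel)"
    by (rule lborel.borel_measurable_lebesgue_integral, measurable)+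
  then have "G \<in> borel_measurable (borel \<Otimes>\<^sub>M lborel)"
    unfolding G_def[abs_def] by measurable
  moreover have "(\<lambda>x. (x, g x)) \<in> restrict_space borel \<Omega> \<rightarrow>\<^sub>M borel \<Otimes>\<^sub>M lborel"
  proof (rule measurable_Pair)
    show "(\<lambda>x. x) \<in> restrict_space borel \<Omega> \<rightarrow>\<^sub>M borel"
      by (rule measurable_restrict_space1) simp
  qed (use g in simp)
  ultimately have G_comp: "(\<lambda>x. G (x, g x)) \<in> borel_measurable (restrict_space borel \<Omega>)"
    by (rule measurable_compose[rotated])
  have Fprim_eq: "Fprim f x t = G (x, t)" if "x \<in> \<Omega>" for x t
  proof -
    have "f' (x, s) = f x s" for s using that by (simp add: f'_def)
    then have "G (x, t) = (if 0 \<le> t then (\<integral>s. (if 0 < s \<and> s < t then f x s else 0) \<partial>lborel)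
        else - (\<integral>s. (if t < s \<and> s < 0 then f x s else 0) \<partial>lborel))"
      unfolding G_def fst_conv snd_conv by (simp cong: if_cong)
    then show ?thesis
      by (simp add: Fprim_def interval_lebesgue_integral_def set_lebesgue_integral_def
          zero_ereal_def indicator_times_eq_if)
  qed
  show ?thesis
    using G_comp by (rule measurable_cong[THEN iffD1, rotated]) (simp add: space_restrict_space Fprim_eq)
qed

lemma emeasure_zero_if_set_integral_le_measure:
  assumes "finite_measure M" and E: "E \<in> sets M" and h: "integrable M h"
    and le: "(LINT x:E|M. h x) \<le> measure M E" and gt: "\<And>x. x \<in> E \<Longrightarrow> 1 < h x"
  shows "emeasure M E = 0"
proof -
  interpret finite_measure M by (rule assms(1))
  define g where "g x = indicator E x * (h x - 1)" for x
  have iE: "integrable M (indicator E :: 'a \<Rightarrow> real)"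
    by (rule integrable_real_indicator[OF E]) (simp add: less_top[symmetric])
  have ihE: "integrable M (\<lambda>x. indicator E x * h x)"
    using integrable_mult_indicator[OF E h] by simp
  have g_integrable: "integrable M g"
    unfolding g_def using Bochner_Integration.integrable_diff[OF ihE iE] by (simp add: algebra_simps)
  have g_nonneg: "0 \<le> g x" for x
    unfolding g_def using gt by (auto simp: indicator_def less_imp_le)
  have "integral\<^sup>L M g = (LINT x:E|M. h x) - measure M E"
    unfolding g_def using Bochner_Integration.integral_diff[OF ihE iE] E
    by (simp add: algebra_simps set_lebesgue_integral_def)
  moreover have "0 \<le> integral\<^sup>L M g"
    using g_nonneg by simp
  ultimately have "integral\<^sup>L M g = 0"
    using le by simp
  then have "AE x in M. g x = 0"
    using integral_nonneg_eq_0_iff_AE[OF g_integrable] g_nonneg by simp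
  then have "AE x in M. x \<notin> E"
    by eventually_elim (use gt in \<open>fastforce simp: g_def\<close>)
  then show ?thesis
    using E sets.sets_into_space[OF E] by (subst (asm) AE_iff_measurable[OF E]) auto
qed

lemma abs_le_total_variation:
  assumes "E \<in> sets borel"
  shows "ennreal \<bar>\<mu> E\<bar> \<le> total_variation \<mu> E"
proof -
  have "{E} \<in> {P. finite P \<and> disjoint P \<and> \<Union>P = E \<and> P \<subseteq> sets borel}"
    using assms by (auto simp: disjoint_def)
  then have "(\<Sum>A\<in>{E}. ennreal \<bar>\<mu> A\<bar>)
      \<le> (SUP P \<in> {P. finite P \<and> disjoint P \<and> \<Union>P = E \<and> P \<subseteq> sets borel}. \<Sum>A\<in>P. ennreal \<bar>\<mu> A\<bar>)"
    by (rule SUP_upper)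
  then show ?thesis
    unfolding total_variation_def by simp
qed

locale sigma_lub =
  fixes \<Omega> :: "'a::euclidean_space set" and \<sigma> :: "'a measure" and f :: "'a \<Rightarrow> real \<Rightarrow> real"
  assumes open_\<Omega>: "open \<Omega>"
    and \<sigma>_fin: "finite_measure_on \<Omega> \<sigma>"
    and f_borel: "(\<lambda>(x, t). f x t) \<in> borel_measurable (restrict_space borel (\<Omega> \<times> (UNIV::real set)))"
    and f_int: "\<And>t. integrable \<sigma> (\<lambda>x. f x t)"
    and b4: "is_measure_lub \<Omega> ((\<lambda>t E. LINT x:E|\<sigma>. f x t) ` UNIV) \<sigma>"
begin

sublocale finite_measure \<sigma>
  using \<sigma>_fin by (simp add: finite_measure_on_def)

lemma sets_\<sigma> [measurable_cong]: "sets \<sigma> = sets borel"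
  using \<sigma>_fin by (simp add: finite_measure_on_def)

lemma space_\<sigma>: "space \<sigma> = UNIV"
  using sets_eq_imp_space_eq[OF sets_\<sigma>] by simp

lemma \<Omega>_borel [measurable]: "\<Omega> \<in> sets borel"
  using open_\<Omega> by simp

lemma AE_in_\<Omega>: "AE x in \<sigma>. x \<in> \<Omega>"
  using \<sigma>_fin by (intro AE_I[of _ _ "UNIV - \<Omega>"]) (auto simp: finite_measure_on_def space_\<sigma>)

lemma f_slice_borel_measurable [measurable]: "(\<lambda>x. f x t) \<in> borel_measurable borel"
  using borel_measurable_integrable[OF f_int] by (simp add: measurable_cong_sets[OF sets_\<sigma> refl])

lemma Fprim_comp_borel_measurable:
  "g \<in> borel_measurable (restrict_space borel \<Omega>) \<Longrightarrow>
    (\<lambda>x. Fprim f x (g x)) \<in> borel_measurable (restrict_space borel \<Omega>)"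
  by (rule Fprim_borel_measurable[OF \<Omega>_borel f_borel])

lemma abs_set_integral_le_measure:
  assumes "E \<in> sets borel" "E \<subseteq> \<Omega>"
  shows "\<bar>LINT x:E|\<sigma>. f x t\<bar> \<le> measure \<sigma> E"
proof -
  have "ennreal \<bar>LINT x:E|\<sigma>. f x t\<bar> \<le> total_variation (\<lambda>E. LINT x:E|\<sigma>. f x t) E"
    by (rule abs_le_total_variation[OF assms(1)])
  also have "\<dots> \<le> emeasure \<sigma> E"
    using b4 assms unfolding is_measure_lub_def by blast
  finally show ?thesis
    by (simp add: emeasure_eq_measure)
qed

lemma AE_abs_f_le_1: "AE x in \<sigma>. x \<in> \<Omega> \<longrightarrow> \<bar>f x t\<bar> \<le> 1"
proof -
  have null: "{x\<in>\<Omega>. 1 < h x} \<in> null_sets \<sigma>"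
    if h: "h = (\<lambda>x. f x t) \<or> h = (\<lambda>x. - f x t)" for h
  proof -
    have E: "{x\<in>\<Omega>. 1 < h x} \<in> sets borel" using h by auto
    have "emeasure \<sigma> {x\<in>\<Omega>. 1 < h x} = 0"
    proof (rule emeasure_zero_if_set_integral_le_measure)
      show "integrable \<sigma> h" using h f_int by auto
      show "(LINT x:{x\<in>\<Omega>. 1 < h x}|\<sigma>. h x) \<le> measure \<sigma> {x\<in>\<Omega>. 1 < h x}"
        using h E abs_set_integral_le_measure[of "{x\<in>\<Omega>. 1 < h x}" t]
        by (auto simp: set_lebesgue_integral_def)
    qed (use E in \<open>auto simp: finite_measure_axioms sets_\<sigma>\<close>)
    then show ?thesis using E by (simp add: null_sets_def sets_\<sigma>)
  qed
  have "{x\<in>\<Omega>. 1 < f x t} \<union> {x\<in>\<Omega>. 1 < - f x t} \<in> null_sets \<sigma>"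
    using null[of "\<lambda>x. f x t"] null[of "\<lambda>x. - f x t"] by blast
  then show ?thesis
    by (rule AE_I') (auto simp: space_\<sigma>)
qed

text \<open>By Fubini on \<open>\<sigma> \<otimes> \<L>\<^sup>1\<close>, the bound \<open>\<bar>f(\<cdot>, t)\<bar> \<le> 1\<close>, valid \<open>\<sigma>\<close>-a.e. for each \<open>t\<close>, holds for a.e. \<open>t\<close>
  at \<open>\<sigma>\<close>-a.e. \<open>x\<close>.\<close>

lemma AE_Fprim_lipschitz: "AE x in \<sigma>. x \<in> \<Omega> \<longrightarrow> 1-lipschitz_on UNIV (Fprim f x)"
proof -
  interpret pair_sigma_finite \<sigma> lborel ..
  have \<Omega>U: "\<Omega> \<times> (UNIV::real set) \<in> sets borel"
    by (subst borel_prod[symmetric]) (intro pair_measureI, auto)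
  have "{p \<in> space (restrict_space borel (\<Omega> \<times> (UNIV::real set))). \<bar>(\<lambda>(x, t). f x t) p\<bar> \<le> 1}
      \<in> sets (restrict_space borel (\<Omega> \<times> (UNIV::real set)))"
    using f_borel by measurable
  then have "{p \<in> \<Omega> \<times> UNIV. \<bar>f (fst p) (snd p)\<bar> \<le> 1} \<in> sets borel"
    using \<Omega>U by (simp add: sets_restrict_space_iff space_restrict_space case_prod_beta)
  then have "(- \<Omega>) \<times> UNIV \<union> {p \<in> \<Omega> \<times> UNIV. \<bar>f (fst p) (snd p)\<bar> \<le> 1} \<in> sets (borel \<Otimes>\<^sub>M borel)"
    unfolding borel_prod by (intro sets.Un) (auto simp: borel_prod[symmetric])
  moreover have "{p \<in> space (\<sigma> \<Otimes>\<^sub>M lborel). fst p \<in> \<Omega> \<longrightarrow> \<bar>f (fst p) (snd p)\<bar> \<le> 1}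
      = (- \<Omega>) \<times> UNIV \<union> {p \<in> \<Omega> \<times> UNIV. \<bar>f (fst p) (snd p)\<bar> \<le> 1}"
    by (auto simp: space_pair_measure space_\<sigma>)
  ultimately have meas: "{p \<in> space (\<sigma> \<Otimes>\<^sub>M lborel). fst p \<in> \<Omega> \<longrightarrow> \<bar>f (fst p) (snd p)\<bar> \<le> 1}
      \<in> sets (\<sigma> \<Otimes>\<^sub>M lborel)"
    by (simp cong: sets_pair_measure_cong add: sets_\<sigma>)
  have "AE t in lborel. AE x in \<sigma>. x \<in> \<Omega> \<longrightarrow> \<bar>f x t\<bar> \<le> 1"
    using AE_abs_f_le_1 by simp
  then have "AE x in \<sigma>. AE t in lborel. x \<in> \<Omega> \<longrightarrow> \<bar>f x t\<bar> \<le> 1"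
    by (subst AE_commute[OF meas])
  then show ?thesis
  proof eventually_elim
    case (elim x)
    show ?case
    proof
      assume x: "x \<in> \<Omega>"
      have "(\<lambda>s. (x, s)) \<in> lborel \<rightarrow>\<^sub>M restrict_space borel (\<Omega> \<times> (UNIV::real set))"
        using x by (intro measurable_restrict_space2) (auto simp: borel_prod[symmetric])
      from measurable_compose[OF this f_borel] have "f x \<in> borel_measurable lborel"
        by simp
      then show "1-lipschitz_on UNIV (Fprim f x)"
        using elim x by (intro Fprim_lipschitz) auto
    qed
  qed
qed

lemma lipschitz_setE:
  obtains G where "G \<in> sets borel" "G \<subseteq> \<Omega>" "AE x in \<sigma>. x \<in> G"
    "\<And>x. x \<in> G \<Longrightarrow> 1-lipschitz_on UNIV (Fprim f x)"
proof -
  obtain N where N: "N \<in> null_sets \<sigma>"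
    "{x \<in> space \<sigma>. \<not> (x \<in> \<Omega> \<longrightarrow> 1-lipschitz_on UNIV (Fprim f x))} \<subseteq> N"
    using AE_Fprim_lipschitz unfolding eventually_ae_filter by blast
  show ?thesis
  proof (rule that[of "\<Omega> - N"])
    show "\<Omega> - N \<in> sets borel" using null_setsD2[OF N(1)] sets_\<sigma> by auto
    show "AE x in \<sigma>. x \<in> \<Omega> - N"
      using AE_in_\<Omega> AE_not_in[OF N(1)] by eventually_elim simp
  qed (use N(2) space_\<sigma> in auto)
qed

end

section \<open>A Borel choice of the least nonnegative point\<close>

definition least_nonneg :: "(real \<Rightarrow> real) \<Rightarrow> real" where
  "least_nonneg h = Inf {s\<in>{0..1}. 0 \<le> h s}"

lemma
  fixes h :: "real \<Rightarrow> real"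
  assumes h: "continuous_on {0..1} h" and s: "s \<in> {0..1}" "0 \<le> h s"
  shows least_nonneg_mem: "least_nonneg h \<in> {0..1}" "0 \<le> h (least_nonneg h)"
    and least_nonneg_le: "least_nonneg h \<le> s"
proof -
  let ?S = "{s\<in>{0..1}. 0 \<le> h s}"
  have bdd: "bdd_below ?S" by (rule bdd_belowI[of _ 0]) auto
  have "closed ({0..1} \<inter> h -` {0..})"
    by (rule continuous_closed_preimage[OF h]) auto
  moreover have "{0..1} \<inter> h -` {0..} = ?S" by auto
  ultimately have "Inf ?S \<in> ?S"
    using s bdd by (intro closed_contains_Inf) auto
  then show "least_nonneg h \<in> {0..1}" "0 \<le> h (least_nonneg h)"
    unfolding least_nonneg_def by auto
  show "least_nonneg h \<le> s"
    unfolding least_nonneg_def using s bdd by (intro cInf_lower) auto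
qed

lemma least_nonneg_root:
  fixes h :: "real \<Rightarrow> real"
  assumes h: "continuous_on {0..1} h" and h0: "h 0 \<le> 0" and s: "s \<in> {0..1}" "0 \<le> h s"
  shows "h (least_nonneg h) = 0"
proof (rule ccontr)
  let ?L = "least_nonneg h"
  assume "h ?L \<noteq> 0"
  then have pos: "0 < h ?L" using least_nonneg_mem[OF h s] by simp
  then have L: "0 < ?L" "?L \<le> 1"
    using least_nonneg_mem[OF h s] h0 by (auto simp: less_le)
  have "\<exists>d>0. \<forall>y\<in>{0..1}. dist y ?L < d \<longrightarrow> dist (h y) (h ?L) < h ?L"
    using h L pos unfolding continuous_on_iff by auto
  then obtain d where d: "d > 0" "\<And>y. y \<in> {0..1} \<Longrightarrow> dist y ?L < d \<Longrightarrow> dist (h y) (h ?L) < h ?L"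
    by blast
  define y where "y = max 0 (?L - d / 2)"
  have y: "y \<in> {0..1}" "dist y ?L < d" "y < ?L"
    using L d(1) by (auto simp: y_def dist_real_def)
  then have "0 < h y" using d(2)[OF y(1,2)] by (simp add: dist_real_def)
  then have "?L \<le> y" using least_nonneg_le[OF h y(1)] by simp
  with y(3) show False by simp
qed

lemma continuous_le_on_rationals:
  fixes h :: "real \<Rightarrow> real"
  assumes h: "continuous_on {0..c} h"
    and le: "\<And>q. q \<in> \<rat> \<Longrightarrow> 0 \<le> q \<Longrightarrow> q \<le> c \<Longrightarrow> h q \<le> a"
    and s: "0 \<le> s" "s \<le> c"
  shows "h s \<le> a"
proof (rule ccontr)
  assume "\<not> h s \<le> a"
  then have "\<exists>d>0. \<forall>y\<in>{0..c}. dist y s < d \<longrightarrow> dist (h y) (h s) < h s - a"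
    using h s unfolding continuous_on_iff by auto
  then obtain d where d: "d > 0" "\<And>y. y \<in> {0..c} \<Longrightarrow> dist y s < d \<Longrightarrow> dist (h y) (h s) < h s - a"
    by blast
  obtain q where q: "q \<in> \<rat>" "0 \<le> q" "q \<le> c" "dist q s < d"
  proof (cases "s = 0")
    case True
    then show ?thesis using that[of 0] d s by simp
  next
    case False
    then have "max 0 (s - d) < s" using s d by simp
    then obtain q where "q \<in> \<rat>" "max 0 (s - d) < q" "q < s"
      using Rats_dense_in_real by blast
    then show ?thesis using that[of q] s by (simp add: dist_real_def)
  qed
  then have "dist (h q) (h s) < h s - a" using d(2) by simp
  with le[OF q(1-3)] show False by (simp add: dist_real_def)
qed

text \<open>By continuity, uniform negativity of \<open>h\<close> on \<open>[0, c]\<close> can be tested at rational points.\<close>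

lemma less_least_nonneg_iff:
  fixes h :: "real \<Rightarrow> real"
  assumes h: "continuous_on {0..1} h" and s: "s \<in> {0..1}" "0 \<le> h s"
  shows "c < least_nonneg h \<longleftrightarrow>
    c < 0 \<or> (0 \<le> c \<and> c < 1 \<and> (\<exists>k::nat. \<forall>q\<in>{q\<in>\<rat>. 0 \<le> q \<and> q \<le> c}. h q \<le> - 1 / Suc k))"
    (is "_ \<longleftrightarrow> _ \<or> (_ \<and> _ \<and> ?neg)")
proof
  assume cL: "c < least_nonneg h"
  show "c < 0 \<or> (0 \<le> c \<and> c < 1 \<and> ?neg)"
  proof (cases "c < 0")
    case False
    have c: "0 \<le> c" "c < 1"
      using False cL least_nonneg_mem[OF h s] by auto
    have neg: "h t < 0" if t: "t \<in> {0..c}" for t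
    proof (rule ccontr)
      assume "\<not> h t < 0"
      then have "least_nonneg h \<le> t" using t c by (intro least_nonneg_le[OF h]) auto
      with t cL show False by simp
    qed
    have "continuous_on {0..c} h" using c by (intro continuous_on_subset[OF h]) auto
    from continuous_attains_sup[OF compact_Icc _ this]
    obtain m where m: "m \<in> {0..c}" "\<And>t. t \<in> {0..c} \<Longrightarrow> h t \<le> h m"
      using c by auto
    obtain k where k: "inverse (real (Suc k)) < - h m"
      using reals_Archimedean[of "- h m"] neg[OF m(1)] by auto
    have "h q \<le> - 1 / Suc k" if "q \<in> {0..c}" for q
      using m(2)[OF that] k by (simp add: inverse_eq_divide)
    then have ?neg by (intro exI[of _ k]) auto
    then show ?thesis using c by blast
  qed simp
next
  assume "c < 0 \<or> (0 \<le> c \<and> c < 1 \<and> ?neg)"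
  then show "c < least_nonneg h"
  proof (elim disjE conjE exE)
    fix k :: nat assume c: "0 \<le> c" "c < 1" and k: "\<forall>q\<in>{q\<in>\<rat>. 0 \<le> q \<and> q \<le> c}. h q \<le> - 1 / Suc k"
    show "c < least_nonneg h"
    proof (rule ccontr)
      assume L: "\<not> c < least_nonneg h"
      have "h (least_nonneg h) \<le> - 1 / Suc k"
      proof (rule continuous_le_on_rationals[of c h])
        show "continuous_on {0..c} h"
          using c by (intro continuous_on_subset[OF h]) auto
        show "0 \<le> least_nonneg h" "least_nonneg h \<le> c"
          using L least_nonneg_mem(1)[OF h s] by auto
      qed (use k in auto)
      moreover have "0 < 1 / real (Suc k)" by simp
      ultimately show False using least_nonneg_mem(2)[OF h s] by linarith
    qed
  next
    assume "c < 0"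
    then show "c < least_nonneg h" using least_nonneg_mem(1)[OF h s] by simp
  qed
qed

lemma least_nonneg_borel_measurable:
  fixes H :: "'a \<Rightarrow> real \<Rightarrow> real"
  assumes meas: "\<And>s. (\<lambda>x. H x s) \<in> borel_measurable M"
    and cont: "\<And>x. x \<in> space M \<Longrightarrow> continuous_on {0..1} (H x)"
    and ex: "\<And>x. x \<in> space M \<Longrightarrow> \<exists>s\<in>{0..1}. 0 \<le> H x s"
  shows "(\<lambda>x. least_nonneg (H x)) \<in> borel_measurable M"
proof (unfold borel_measurable_iff_greater, intro allI)
  fix c :: real
  define Q where "Q = {q\<in>\<rat>. 0 \<le> q \<and> q \<le> c}"
  have [measurable]: "(\<lambda>x. H x s) \<in> borel_measurable M" for s by (rule meas)
  have "countable Q" unfolding Q_def by (rule countable_subset[OF _ countable_rat]) auto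
  then have [measurable]: "Measurable.pred M (\<lambda>x. \<exists>k::nat. \<forall>q\<in>Q. H x q \<le> - 1 / Suc k)"
    by (intro pred_intros_countable measurable_pred_countable) measurable
  have iff:  "c < least_nonneg (H x) \<longleftrightarrow>
      c < 0 \<or> (0 \<le> c \<and> c < 1 \<and> (\<exists>k::nat. \<forall>q\<in>Q. H x q \<le> - 1 / Suc k))"
    if x: "x \<in> space M" for x
  proof -
    obtain s where "s \<in> {0..1}" "0 \<le> H x s" using ex[OF x] by blast
    then show ?thesis unfolding Q_def by (rule less_least_nonneg_iff[OF cont[OF x]])
  qed
  have "{x \<in> space M. c < least_nonneg (H x)} =
      {x \<in> space M. c < 0 \<or> (0 \<le> c \<and> c < 1 \<and> (\<exists>k::nat. \<forall>q\<in>Q. H x q \<le> - 1 / Suc k))}"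
    by (rule Collect_cong, rule conj_cong, rule refl, erule iff)
  also have "\<dots> \<in> sets M" by measurable
  finally show "{x \<in> space M. c < least_nonneg (H x)} \<in> sets M" .
qed

section \<open>Test functions\<close>

lemma test_fun_continuous: "test_fun \<Omega> \<phi> \<Longrightarrow> continuous_on UNIV \<phi>"
  unfolding test_fun_def smooth_fun_def
  by (metis continuous_at_imp_continuous_on differentiable_imp_continuous_within)

lemma test_fun_borel_measurable: "test_fun \<Omega> \<phi> \<Longrightarrow> \<phi> \<in> borel_measurable borel"
  by (intro borel_measurable_continuous_onI test_fun_continuous)

lemma test_fun_vanishes_outside: "test_fun \<Omega> \<phi> \<Longrightarrow> x \<notin> \<Omega> \<Longrightarrow> \<phi> x = 0"
  unfolding test_fun_def using closure_subset[of "{x. \<phi> x \<noteq> 0}"] by blast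

lemma test_fun_bounded:
  assumes "test_fun \<Omega> \<phi>"
  obtains C where "\<And>x. \<bar>\<phi> x\<bar> \<le> C"
proof -
  let ?K = "closure {x. \<phi> x \<noteq> 0}"
  have "compact (\<phi> ` ?K)"
    using assms unfolding test_fun_def
    by (intro compact_continuous_image continuous_on_subset[OF test_fun_continuous[OF assms]]) auto
  from compact_imp_bounded[OF this]
  obtain C where C: "\<And>y. y \<in> \<phi> ` ?K \<Longrightarrow> \<bar>y\<bar> \<le> C"
    unfolding bounded_real by blast
  have "\<bar>\<phi> x\<bar> \<le> max C 0" for x
  proof (cases "\<phi> x = 0")
    case False
    then have "\<phi> x \<in> \<phi> ` ?K" using closure_subset[of "{x. \<phi> x \<noteq> 0}"] by blast
    then show ?thesis using C by fastforce
  qed simp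
  then show ?thesis by (rule that)
qed

context sigma_lub
begin

lemma test_fun_mult_measurable:
  assumes "test_fun \<Omega> \<phi>" "h \<in> borel_measurable (restrict_space borel \<Omega>)"
  shows "(\<lambda>x. \<phi> x * h x) \<in> borel_measurable \<sigma>"
proof -
  have "(\<lambda>x. indicator \<Omega> x *\<^sub>R h x) \<in> borel_measurable borel"
    using borel_measurable_restrict_space_iff[THEN iffD1, OF _ assms(2)] by simp
  moreover have "(\<lambda>x. \<phi> x * h x) = (\<lambda>x. \<phi> x * (indicator \<Omega> x *\<^sub>R h x))"
    using test_fun_vanishes_outside[OF assms(1)] by (auto simp: indicator_def fun_eq_iff)
  ultimately show ?thesis
    using test_fun_borel_measurable[OF assms(1)] by (simp add: measurable_cong_sets[OF sets_\<sigma> refl])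
qed

lemma integrable_test_fun_mult:
  assumes "test_fun \<Omega> \<phi>" "h \<in> borel_measurable (restrict_space borel \<Omega>)"
    and "AE x in \<sigma>. x \<in> \<Omega> \<longrightarrow> \<bar>h x\<bar> \<le> K"
  shows "integrable \<sigma> (\<lambda>x. \<phi> x * h x)"
proof -
  obtain C where C: "\<And>x. \<bar>\<phi> x\<bar> \<le> C" using test_fun_bounded[OF assms(1)] by blast
  show ?thesis
  proof (rule Bochner_Integration.integrable_bound[OF integrable_const[of "C * K"]
        test_fun_mult_measurable[OF assms(1,2)]])
    show "AE x in \<sigma>. norm (\<phi> x * h x) \<le> norm (C * K)"
      using assms(3) AE_in_\<Omega>
    proof eventually_elim
      case (elim x)
      then have "\<bar>\<phi> x\<bar> * \<bar>h x\<bar> \<le> C * K"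
        using C[of x] by (intro mult_mono) auto
      then show ?case using abs_ge_self[of "C * K"] by (simp add: abs_mult)
    qed
  qed
qed

end

section \<open>The two pairings\<close>

lemma abs_convex_comb_le:
  fixes L a b M :: real
  assumes "0 \<le> L" "L \<le> 1" "\<bar>a\<bar> \<le> M" "\<bar>b\<bar> \<le> M"
  shows "\<bar>(1 - L) * a + L * b\<bar> \<le> M"
proof -
  have "\<bar>(1 - L) * a + L * b\<bar> \<le> (1 - L) * \<bar>a\<bar> + L * \<bar>b\<bar>"
    using assms(1,2) abs_triangle_ineq[of "(1 - L) * a" "L * b"] by (simp add: abs_mult)
  also have "\<dots> \<le> (1 - L) * M + L * M"
    using assms by (intro add_mono mult_left_mono) auto
  finally show ?thesis by (simp add: algebra_simps)
qed

lemma convex_comb_defects_opposite_sign: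
  fixes L p q :: real
  assumes "0 \<le> L" "L \<le> 1"
  shows "(p - ((1 - L) * p + L * q)) * (q - ((1 - L) * p + L * q)) \<le> 0"
proof -
  have "(p - ((1 - L) * p + L * q)) * (q - ((1 - L) * p + L * q)) = - (L * (1 - L)) * (p - q)\<^sup>2"
    by (simp add: power2_eq_square algebra_simps)
  also have "\<dots> \<le> 0"
    using assms by simp
  finally show ?thesis .
qed

definition convex_coeff :: "real \<Rightarrow> real \<Rightarrow> real \<Rightarrow> real" where
  "convex_coeff p q m = (if min p q \<le> m \<and> m \<le> max p q \<and> q \<noteq> p then (m - p) / (q - p) else 0)"

lemma convex_coeff_bounds: "0 \<le> convex_coeff p q m \<and> convex_coeff p q m \<le> 1"
proof -
  consider "p < q" | "q < p" | "q = p" by linarith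
  then show ?thesis
    by cases (auto simp: convex_coeff_def zero_le_divide_iff divide_le_eq_1)
qed

lemma convex_coeff_outside: "\<not> (min p q \<le> m \<and> m \<le> max p q) \<Longrightarrow> convex_coeff p q m = 0"
  by (auto simp: convex_coeff_def)

lemma convex_coeff_between:
  assumes "min p q \<le> m" "m \<le> max p q"
  shows "(1 - convex_coeff p q m) * p + convex_coeff p q m * q = m"
proof (cases "q = p")
  case False
  then have "convex_coeff p q m * (q - p) = m - p"
    using assms by (simp add: convex_coeff_def)
  then show ?thesis by (simp add: algebra_simps)
qed (use assms in \<open>simp add: convex_coeff_def\<close>)

lemma Fprim_abs_le: "1-lipschitz_on UNIV (Fprim f x) \<Longrightarrow> \<bar>Fprim f x a\<bar> \<le> \<bar>a\<bar>"
  using lipschitz_onD[of 1 UNIV "Fprim f x" a 0] by (simp add: Fprim_zero dist_real_def)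

definition Fprim_mix ::
  "'a::euclidean_space set \<Rightarrow> ('a \<Rightarrow> real \<Rightarrow> real) \<Rightarrow> ('a \<Rightarrow> real) \<Rightarrow> ('a \<Rightarrow> real) \<Rightarrow> 'a \<Rightarrow> real" where
  "Fprim_mix \<Omega> f u \<Lambda> x = (1 - \<Lambda> x) * Fprim f x (ap_lower \<Omega> u x) + \<Lambda> x * Fprim f x (ap_upper \<Omega> u x)"

definition mix_defect ::
  "'a::euclidean_space set \<Rightarrow> ('a \<Rightarrow> real \<Rightarrow> real) \<Rightarrow> ('a \<Rightarrow> real) \<Rightarrow> ('a \<Rightarrow> real) \<Rightarrow> 'a \<Rightarrow> real \<Rightarrow> real" where
  "mix_defect \<Omega> f u \<Lambda> x s =
    Fprim f x ((1 - s) * ap_lower \<Omega> u x + s * ap_upper \<Omega> u x) - Fprim_mix \<Omega> f u \<Lambda> x"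

text \<open>The defect changes sign between \<open>s = 0\<close> and \<open>s = 1\<close>, so the factor \<open>- mix_defect \<dots> 0\<close>
  makes it nonpositive at \<open>0\<close> and nonnegative at \<open>1\<close>; when that factor vanishes, the least
  nonnegative point is \<open>0\<close>, itself a zero of the defect.\<close>

definition paren_weight ::
  "'a::euclidean_space set \<Rightarrow> ('a \<Rightarrow> real \<Rightarrow> real) \<Rightarrow> ('a \<Rightarrow> real) \<Rightarrow> ('a \<Rightarrow> real) \<Rightarrow> 'a \<Rightarrow> real" where
  "paren_weight \<Omega> f u \<Lambda> x = least_nonneg (\<lambda>s. - (mix_defect \<Omega> f u \<Lambda> x 0 * mix_defect \<Omega> f u \<Lambda> x s))"

definition brack_weight ::
  "'a::euclidean_space set \<Rightarrow> ('a \<Rightarrow> real \<Rightarrow> real) \<Rightarrow> ('a \<Rightarrow> real) \<Rightarrow> ('a \<Rightarrow> real) \<Rightarrow> 'a \<Rightarrow> real" where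
  "brack_weight \<Omega> f u lam x =
    convex_coeff (Fprim f x (ap_lower \<Omega> u x)) (Fprim f x (ap_upper \<Omega> u x)) (Fprim f x (u_interp \<Omega> u lam x))"

definition brack_remainder ::
  "'a::euclidean_space set \<Rightarrow> ('a \<Rightarrow> real \<Rightarrow> real) \<Rightarrow> ('a \<Rightarrow> real) \<Rightarrow> ('a \<Rightarrow> real) \<Rightarrow> 'a \<Rightarrow> real" where
  "brack_remainder \<Omega> f u lam x = Fprim_mix \<Omega> f u (brack_weight \<Omega> f u lam) x - Fprim f x (u_interp \<Omega> u lam x)"

lemma pairing_brack_eq:
  "pairing_brack \<Omega> b f \<sigma> u \<Lambda> \<phi> = (\<integral>x. \<phi> x * - Fprim_mix \<Omega> f u \<Lambda> x \<partial>\<sigma>) + div_Bu \<Omega> b u \<phi>"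
  by (simp add: pairing_brack_def Fprim_mix_def)

lemma pairing_paren_eq:
  "pairing_paren \<Omega> b f \<sigma> u lam \<phi> = (\<integral>x. \<phi> x * - Fprim f x (u_interp \<Omega> u lam x) \<partial>\<sigma>) + div_Bu \<Omega> b u \<phi>"
  by (simp add: pairing_paren_def)

lemma mix_defect_continuous:
  assumes "1-lipschitz_on UNIV (Fprim f x)"
  shows "continuous_on {0..1} (mix_defect \<Omega> f u \<Lambda> x)"
proof -
  have "continuous_on {0..1} (\<lambda>s. Fprim f x ((1 - s) * ap_lower \<Omega> u x + s * ap_upper \<Omega> u x))"
    by (rule continuous_on_compose2[OF lipschitz_on_continuous_on[OF assms]]) (intro continuous_intros, auto)
  then show ?thesis
    unfolding mix_defect_def by (intro continuous_on_diff continuous_on_const)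
qed

lemma mix_defect_opposite_sign:
  assumes "0 \<le> \<Lambda> x" "\<Lambda> x \<le> 1"
  shows "mix_defect \<Omega> f u \<Lambda> x 0 * mix_defect \<Omega> f u \<Lambda> x 1 \<le> 0"
  using convex_comb_defects_opposite_sign[OF assms] by (simp add: mix_defect_def Fprim_mix_def)

lemma paren_weight:
  assumes lip: "1-lipschitz_on UNIV (Fprim f x)" and \<Lambda>: "0 \<le> \<Lambda> x" "\<Lambda> x \<le> 1"
  shows "paren_weight \<Omega> f u \<Lambda> x \<in> {0..1}"
    and "Fprim f x (u_interp \<Omega> u (paren_weight \<Omega> f u \<Lambda>) x) = Fprim_mix \<Omega> f u \<Lambda> x"
proof -
  let ?D = "mix_defect \<Omega> f u \<Lambda> x" and ?w = "paren_weight \<Omega> f u \<Lambda> x"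
  have H_cont: "continuous_on {0..1} (\<lambda>s. - (?D 0 * ?D s))"
    by (intro continuous_on_minus continuous_on_mult_left mix_defect_continuous[OF lip])
  have H1: "0 \<le> - (?D 0 * ?D 1)"
    using mix_defect_opposite_sign[of \<Lambda> x \<Omega> f u, OF \<Lambda>] by simp
  show w: "?w \<in> {0..1}"
    using least_nonneg_mem(1)[OF H_cont _ H1] by (simp add: paren_weight_def)
  have "- (?D 0 * ?D ?w) = 0"
    using least_nonneg_root[OF H_cont _ _ H1] by (simp add: paren_weight_def)
  moreover have "?w = 0" if "?D 0 = 0"
    using least_nonneg_le[OF H_cont, of 0] that w by (simp add: paren_weight_def)
  ultimately have "?D ?w = 0"
    by (metis mult_eq_0_iff neg_equal_0_iff_equal)
  then show "Fprim f x (u_interp \<Omega> u (paren_weight \<Omega> f u \<Lambda>) x) = Fprim_mix \<Omega> f u \<Lambda> x"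
    unfolding mix_defect_def u_interp_def by linarith
qed

lemma brack_remainder_eq_0:
  assumes "min (Fprim f x (ap_lower \<Omega> u x)) (Fprim f x (ap_upper \<Omega> u x)) \<le> Fprim f x (u_interp \<Omega> u lam x)"
    and "Fprim f x (u_interp \<Omega> u lam x) \<le> max (Fprim f x (ap_lower \<Omega> u x)) (Fprim f x (ap_upper \<Omega> u x))"
  shows "brack_remainder \<Omega> f u lam x = 0"
  using convex_coeff_between[OF assms] by (simp add: brack_remainder_def brack_weight_def Fprim_mix_def)

lemma brack_remainder_no_jump:
  "ap_lower \<Omega> u x = ap_upper \<Omega> u x \<Longrightarrow> brack_remainder \<Omega> f u lam x = 0"
  by (rule brack_remainder_eq_0) (simp_all add: u_interp_def algebra_simps)

lemma abs_brack_remainder_le: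
  assumes lip: "1-lipschitz_on UNIV (Fprim f x)"
    and lam: "0 \<le> lam x" "lam x \<le> 1" and le: "ap_lower \<Omega> u x \<le> ap_upper \<Omega> u x"
  shows "\<bar>brack_remainder \<Omega> f u lam x\<bar> \<le> ap_upper \<Omega> u x - ap_lower \<Omega> u x"
proof (cases "min (Fprim f x (ap_lower \<Omega> u x)) (Fprim f x (ap_upper \<Omega> u x)) \<le> Fprim f x (u_interp \<Omega> u lam x)
    \<and> Fprim f x (u_interp \<Omega> u lam x) \<le> max (Fprim f x (ap_lower \<Omega> u x)) (Fprim f x (ap_upper \<Omega> u x))")
  case True
  then show ?thesis using brack_remainder_eq_0[of f x \<Omega> u lam] le by simp
next
  case False
  then have "brack_remainder \<Omega> f u lam x = Fprim f x (ap_lower \<Omega> u x) - Fprim f x (u_interp \<Omega> u lam x)"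
    by (simp add: brack_remainder_def brack_weight_def convex_coeff_outside Fprim_mix_def)
  then have "\<bar>brack_remainder \<Omega> f u lam x\<bar> \<le> \<bar>ap_lower \<Omega> u x - u_interp \<Omega> u lam x\<bar>"
    using lipschitz_onD[OF lip] by (simp add: dist_real_def)
  also have "ap_lower \<Omega> u x - u_interp \<Omega> u lam x = - (lam x * (ap_upper \<Omega> u x - ap_lower \<Omega> u x))"
    by (simp add: u_interp_def algebra_simps)
  also have "\<bar>\<dots>\<bar> \<le> ap_upper \<Omega> u x - ap_lower \<Omega> u x"
    using lam le by (simp add: abs_mult mult_left_le_one_le)
  finally show ?thesis .
qed

locale pairing_setting = sigma_lub \<Omega> \<sigma> f for \<Omega> :: "'a::euclidean_space set" and \<sigma> f +
  fixes u :: "'a \<Rightarrow> real"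
  assumes u_Linf: "Linfty_on \<Omega> u"
begin

lemma u_boundedE:
  obtains M where "bounded_measurable_on_open \<Omega> u M"
  using u_Linf open_\<Omega> unfolding Linfty_on_def by (metis bounded_measurable_on_open.intro)

lemma ap_upper_borel_measurable [measurable]: "ap_upper \<Omega> u \<in> borel_measurable (restrict_space borel \<Omega>)"
  by (metis u_boundedE bounded_measurable_on_open.ap_upper_borel_measurable)

lemma ap_lower_borel_measurable [measurable]: "ap_lower \<Omega> u \<in> borel_measurable (restrict_space borel \<Omega>)"
  by (metis u_boundedE bounded_measurable_on_open.ap_lower_borel_measurable)

lemma ap_lower_le_ap_upper: "x \<in> \<Omega> \<Longrightarrow> ap_lower \<Omega> u x \<le> ap_upper \<Omega> u x"
  by (metis u_boundedE bounded_measurable_on_open.ap_lower_le_ap_upper)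

lemma Fprim_mix_measurable:
  assumes [measurable]: "\<Lambda> \<in> borel_measurable (restrict_space borel \<Omega>)"
  shows "Fprim_mix \<Omega> f u \<Lambda> \<in> borel_measurable (restrict_space borel \<Omega>)"
proof -
  note [measurable] = Fprim_comp_borel_measurable[OF ap_lower_borel_measurable]
    Fprim_comp_borel_measurable[OF ap_upper_borel_measurable]
  show ?thesis unfolding Fprim_mix_def[abs_def] by measurable
qed

lemma Fprim_u_interp_measurable:
  assumes [measurable]: "lam \<in> borel_measurable (restrict_space borel \<Omega>)"
  shows "(\<lambda>x. Fprim f x (u_interp \<Omega> u lam x)) \<in> borel_measurable (restrict_space borel \<Omega>)"
  by (rule Fprim_comp_borel_measurable) (unfold u_interp_def[abs_def], measurable)

lemma AE_Fprim_interp_bounded: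
  obtains M where "AE x in \<sigma>. x \<in> \<Omega> \<longrightarrow>
    (\<forall>s\<in>{0..1}. \<bar>Fprim f x ((1 - s) * ap_lower \<Omega> u x + s * ap_upper \<Omega> u x)\<bar> \<le> M)"
proof -
  obtain M where bm: "bounded_measurable_on_open \<Omega> u M"
    by (rule u_boundedE)
  obtain G where G: "G \<subseteq> \<Omega>" "AE x in \<sigma>. x \<in> G"
    and lip: "\<And>x. x \<in> G \<Longrightarrow> 1-lipschitz_on UNIV (Fprim f x)"
    by (rule lipschitz_setE) auto
  have "\<bar>Fprim f x ((1 - s) * ap_lower \<Omega> u x + s * ap_upper \<Omega> u x)\<bar> \<le> M"
    if "x \<in> G" "s \<in> {0..1}" for x s
  proof -
    have x: "x \<in> \<Omega>" using that G(1) by blast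
    have "\<bar>(1 - s) * ap_lower \<Omega> u x + s * ap_upper \<Omega> u x\<bar> \<le> M"
      using that bounded_measurable_on_open.ap_lower_bounds[OF bm x]
        bounded_measurable_on_open.ap_upper_bounds[OF bm x]
      by (intro abs_convex_comb_le) auto
    then show ?thesis
      using Fprim_abs_le[OF lip[OF that(1)]] by (rule order_trans[rotated])
  qed
  then show ?thesis
    using G(2) by (intro that[of M]) (auto elim: AE_mp)
qed

lemma pairing_brack_eq_pairing_paren_if_AE:
  assumes "\<Lambda> \<in> borel_measurable (restrict_space borel \<Omega>)"
    and "lam \<in> borel_measurable (restrict_space borel \<Omega>)"
    and eq: "AE x in \<sigma>. x \<in> \<Omega> \<longrightarrow> Fprim_mix \<Omega> f u \<Lambda> x = Fprim f x (u_interp \<Omega> u lam x)"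
    and \<phi>: "test_fun \<Omega> \<phi>"
  shows "pairing_brack \<Omega> b f \<sigma> u \<Lambda> \<phi> = pairing_paren \<Omega> b f \<sigma> u lam \<phi>"
proof -
  have "AE x in \<sigma>. \<phi> x * - Fprim_mix \<Omega> f u \<Lambda> x = \<phi> x * - Fprim f x (u_interp \<Omega> u lam x)"
    using eq by eventually_elim (use test_fun_vanishes_outside[OF \<phi>] in auto)
  then have "(\<integral>x. \<phi> x * - Fprim_mix \<Omega> f u \<Lambda> x \<partial>\<sigma>) = (\<integral>x. \<phi> x * - Fprim f x (u_interp \<Omega> u lam x) \<partial>\<sigma>)"
    by (intro integral_cong_AE test_fun_mult_measurable[OF \<phi>] borel_measurable_uminus
        Fprim_mix_measurable Fprim_u_interp_measurable assms(1,2))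
  then show ?thesis
    unfolding pairing_brack_eq pairing_paren_eq by simp
qed

lemma paren_weight_borel_measurable:
  assumes G: "G \<in> sets borel" "G \<subseteq> \<Omega>" and lip: "\<And>x. x \<in> G \<Longrightarrow> 1-lipschitz_on UNIV (Fprim f x)"
    and \<Lambda>: "borel_01_on \<Omega> \<Lambda>"
  shows "(\<lambda>x. if x \<in> G then paren_weight \<Omega> f u \<Lambda> x else 0) \<in> borel_measurable (restrict_space borel \<Omega>)"
proof -
  have [measurable]: "\<Lambda> \<in> borel_measurable (restrict_space borel \<Omega>)"
    "Fprim_mix \<Omega> f u \<Lambda> \<in> borel_measurable (restrict_space borel \<Omega>)"
    using \<Lambda> Fprim_mix_measurable by (auto simp: borel_01_on_def)
  have [measurable]: "(\<lambda>x. mix_defect \<Omega> f u \<Lambda> x s) \<in> borel_measurable (restrict_space borel \<Omega>)" for s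
    unfolding mix_defect_def by (intro borel_measurable_diff Fprim_comp_borel_measurable; measurable)
  have "(\<lambda>x. - (mix_defect \<Omega> f u \<Lambda> x 0 * mix_defect \<Omega> f u \<Lambda> x s))
      \<in> borel_measurable (restrict_space borel G)" for s
    by (intro measurable_restrict_mono[OF _ G(2)]) measurable
  then have w_meas: "(\<lambda>x. paren_weight \<Omega> f u \<Lambda> x) \<in> borel_measurable (restrict_space borel G)"
    unfolding paren_weight_def
  proof (rule least_nonneg_borel_measurable)
    fix x assume "x \<in> space (restrict_space borel G)"
    then have x: "x \<in> G" "x \<in> \<Omega>" using G(2) by (auto simp: space_restrict_space)
    show "continuous_on {0..1} (\<lambda>s. - (mix_defect \<Omega> f u \<Lambda> x 0 * mix_defect \<Omega> f u \<Lambda> x s))"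
      by (intro continuous_on_minus continuous_on_mult_left mix_defect_continuous lip x(1))
    have "0 \<le> \<Lambda> x" "\<Lambda> x \<le> 1" using \<Lambda> x(2) by (simp_all add: borel_01_on_def)
    from mix_defect_opposite_sign[of \<Lambda> x \<Omega> f u, OF this]
    show "\<exists>s\<in>{0..1}. 0 \<le> - (mix_defect \<Omega> f u \<Lambda> x 0 * mix_defect \<Omega> f u \<Lambda> x s)"
      by (intro bexI[of _ 1]) simp_all
  qed
  have "(\<lambda>x. indicator G x * paren_weight \<Omega> f u \<Lambda> x) \<in> borel_measurable borel"
    using borel_measurable_restrict_space_iff[THEN iffD1, OF _ w_meas] G(1) by simp
  then show ?thesis
    unfolding indicator_times_eq_if(1) by (rule measurable_restrict_space1)
qed

lemma pairing_brack_as_pairing_paren: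
  assumes \<Lambda>: "borel_01_on \<Omega> \<Lambda>"
  shows "\<exists>lam. borel_01_on \<Omega> lam \<and>
    (\<forall>\<phi>. test_fun \<Omega> \<phi> \<longrightarrow> pairing_brack \<Omega> b f \<sigma> u \<Lambda> \<phi> = pairing_paren \<Omega> b f \<sigma> u lam \<phi>)"
proof -
  obtain G where G: "G \<in> sets borel" "G \<subseteq> \<Omega>" "AE x in \<sigma>. x \<in> G"
    and lip: "\<And>x. x \<in> G \<Longrightarrow> 1-lipschitz_on UNIV (Fprim f x)"
    by (rule lipschitz_setE) auto
  define lam where "lam x = (if x \<in> G then paren_weight \<Omega> f u \<Lambda> x else 0)" for x
  have \<Lambda>01: "0 \<le> \<Lambda> x" "\<Lambda> x \<le> 1" if "x \<in> G" for x
    using \<Lambda> that G(2) by (auto simp: borel_01_on_def)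
  have lam_meas: "lam \<in> borel_measurable (restrict_space borel \<Omega>)"
    unfolding lam_def using paren_weight_borel_measurable[OF G(1,2) lip \<Lambda>] .
  have "borel_01_on \<Omega> lam"
    using lam_meas paren_weight(1)[OF lip \<Lambda>01]
    by (auto simp: borel_01_on_def lam_def)
  moreover have "AE x in \<sigma>. x \<in> \<Omega> \<longrightarrow> Fprim_mix \<Omega> f u \<Lambda> x = Fprim f x (u_interp \<Omega> u lam x)"
    using G(3)
  proof eventually_elim
    case (elim x)
    then show ?case
      using paren_weight(2)[OF lip \<Lambda>01, of x]
      by (simp add: u_interp_def lam_def)
  qed
  ultimately show ?thesis
    using pairing_brack_eq_pairing_paren_if_AE[OF _ lam_meas] \<Lambda> by (auto simp: borel_01_on_def)
qed

lemma brack_weight_borel_01: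
  assumes "borel_01_on \<Omega> lam"
  shows "borel_01_on \<Omega> (brack_weight \<Omega> f u lam)"
proof -
  have lam_meas: "lam \<in> borel_measurable (restrict_space borel \<Omega>)"
    using assms by (simp add: borel_01_on_def)
  note [measurable] = Fprim_comp_borel_measurable[OF ap_lower_borel_measurable]
    Fprim_comp_borel_measurable[OF ap_upper_borel_measurable] Fprim_u_interp_measurable[OF lam_meas]
  have "brack_weight \<Omega> f u lam \<in> borel_measurable (restrict_space borel \<Omega>)"
    unfolding brack_weight_def[abs_def] convex_coeff_def by measurable
  then show ?thesis
    using convex_coeff_bounds by (simp add: borel_01_on_def brack_weight_def)
qed

lemma brack_remainder_measurable:
  assumes "borel_01_on \<Omega> lam"
  shows "brack_remainder \<Omega> f u lam \<in> borel_measurable (restrict_space borel \<Omega>)"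
  using assms brack_weight_borel_01[OF assms] unfolding brack_remainder_def[abs_def] borel_01_on_def
  by (intro borel_measurable_diff Fprim_mix_measurable Fprim_u_interp_measurable) auto

lemma jump_set_sets: "jump_set \<Omega> u \<in> sets (restrict_space borel \<Omega>)"
proof -
  have "{x \<in> space (restrict_space borel \<Omega>). ap_lower \<Omega> u x < ap_upper \<Omega> u x}
      \<in> sets (restrict_space borel \<Omega>)" by measurable
  then show ?thesis by (simp add: jump_set_def space_restrict_space)
qed

lemma AE_brack_integrands_bounded:
  assumes "borel_01_on \<Omega> lam"
  obtains M where "AE x in \<sigma>. x \<in> \<Omega> \<longrightarrow>
    \<bar>Fprim_mix \<Omega> f u (brack_weight \<Omega> f u lam) x\<bar> \<le> M \<and> \<bar>Fprim f x (u_interp \<Omega> u lam x)\<bar> \<le> M"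
proof -
  obtain M where "AE x in \<sigma>. x \<in> \<Omega> \<longrightarrow>
    (\<forall>s\<in>{0..1}. \<bar>Fprim f x ((1 - s) * ap_lower \<Omega> u x + s * ap_upper \<Omega> u x)\<bar> \<le> M)"
    by (rule AE_Fprim_interp_bounded)
  then have "AE x in \<sigma>. x \<in> \<Omega> \<longrightarrow>
    \<bar>Fprim_mix \<Omega> f u (brack_weight \<Omega> f u lam) x\<bar> \<le> M \<and> \<bar>Fprim f x (u_interp \<Omega> u lam x)\<bar> \<le> M"
  proof eventually_elim
    case (elim x)
    show ?case
    proof
      assume x: "x \<in> \<Omega>"
      have "\<bar>Fprim f x (ap_lower \<Omega> u x)\<bar> \<le> M" "\<bar>Fprim f x (ap_upper \<Omega> u x)\<bar> \<le> M"
        using elim x by (auto dest: bspec[of _ _ 0] bspec[of _ _ 1])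
      then show "\<bar>Fprim_mix \<Omega> f u (brack_weight \<Omega> f u lam) x\<bar> \<le> M \<and> \<bar>Fprim f x (u_interp \<Omega> u lam x)\<bar> \<le> M"
        using elim x assms convex_coeff_bounds
        by (auto simp: Fprim_mix_def brack_weight_def u_interp_def borel_01_on_def
            intro!: abs_convex_comb_le)
    qed
  qed
  then show ?thesis by (rule that)
qed

lemma Fprim_u_interp_split:
  assumes "x \<in> \<Omega>"
  shows "Fprim f x (u_interp \<Omega> u lam x) = Fprim_mix \<Omega> f u (brack_weight \<Omega> f u lam) x
    - indicator (jump_set \<Omega> u) x * brack_remainder \<Omega> f u lam x"
proof (cases "x \<in> jump_set \<Omega> u")
  case False
  then have "brack_remainder \<Omega> f u lam x = 0"
    using assms ap_lower_le_ap_upper[OF assms] by (intro brack_remainder_no_jump) (simp add: jump_set_def)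
  then show ?thesis using False by (simp add: brack_remainder_def)
qed (simp add: brack_remainder_def)

lemma pairing_paren_eq_pairing_brack_add:
  assumes lam: "borel_01_on \<Omega> lam" and \<phi>: "test_fun \<Omega> \<phi>"
  shows "pairing_paren \<Omega> b f \<sigma> u lam \<phi> = pairing_brack \<Omega> b f \<sigma> u (brack_weight \<Omega> f u lam) \<phi>
    + (LINT x:jump_set \<Omega> u|\<sigma>. \<phi> x * brack_remainder \<Omega> f u lam x)"
proof -
  let ?\<Lambda> = "brack_weight \<Omega> f u lam" and ?R = "brack_remainder \<Omega> f u lam" and ?J = "jump_set \<Omega> u"
  obtain M where bounds: "AE x in \<sigma>. x \<in> \<Omega> \<longrightarrow>
    \<bar>Fprim_mix \<Omega> f u ?\<Lambda> x\<bar> \<le> M \<and> \<bar>Fprim f x (u_interp \<Omega> u lam x)\<bar> \<le> M"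
    using AE_brack_integrands_bounded[OF lam] by blast
  have [measurable]: "?R \<in> borel_measurable (restrict_space borel \<Omega>)"
    by (rule brack_remainder_measurable[OF lam])
  have "?\<Lambda> \<in> borel_measurable (restrict_space borel \<Omega>)"
    using brack_weight_borel_01[OF lam] by (simp add: borel_01_on_def)
  then have i1: "integrable \<sigma> (\<lambda>x. \<phi> x * - Fprim_mix \<Omega> f u ?\<Lambda> x)"
    using bounds
    by (intro integrable_test_fun_mult[OF \<phi>, where K = M] borel_measurable_uminus Fprim_mix_measurable)
      (auto elim: AE_mp)
  have i2: "integrable \<sigma> (\<lambda>x. \<phi> x * (indicator ?J x * ?R x))"
  proof (rule integrable_test_fun_mult[OF \<phi>, where K = "M + M"])
    show "(\<lambda>x. indicator ?J x * ?R x) \<in> borel_measurable (restrict_space borel \<Omega>)"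
      using jump_set_sets by measurable
    show "AE x in \<sigma>. x \<in> \<Omega> \<longrightarrow> \<bar>indicator ?J x * ?R x\<bar> \<le> M + M"
      using bounds by eventually_elim (auto simp: brack_remainder_def indicator_def)
  qed
  have "\<phi> x * - Fprim f x (u_interp \<Omega> u lam x)
      = \<phi> x * - Fprim_mix \<Omega> f u ?\<Lambda> x + \<phi> x * (indicator ?J x * ?R x)" for x
    using Fprim_u_interp_split[of x lam] test_fun_vanishes_outside[OF \<phi>, of x]
    by (cases "x \<in> \<Omega>") (simp_all add: right_diff_distrib)
  then have "(\<integral>x. \<phi> x * - Fprim f x (u_interp \<Omega> u lam x) \<partial>\<sigma>) =
      (\<integral>x. \<phi> x * - Fprim_mix \<Omega> f u ?\<Lambda> x \<partial>\<sigma>) + (\<integral>x. \<phi> x * (indicator ?J x * ?R x) \<partial>\<sigma>)"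
    using Bochner_Integration.integral_add[OF i1 i2] by simp
  moreover have "(\<integral>x. \<phi> x * (indicator ?J x * ?R x) \<partial>\<sigma>) = (LINT x:?J|\<sigma>. \<phi> x * ?R x)"
    by (simp add: set_lebesgue_integral_def algebra_simps)
  ultimately show ?thesis
    unfolding pairing_brack_eq pairing_paren_eq by simp
qed

lemma pairing_paren_as_pairing_brack:
  assumes lam: "borel_01_on \<Omega> lam"
  shows "\<exists>\<Lambda>' R. borel_01_on \<Omega> \<Lambda>' \<and>
           R \<in> borel_measurable (restrict_space borel (jump_set \<Omega> u)) \<and>
           (\<forall>\<phi>. test_fun \<Omega> \<phi> \<longrightarrow>
              pairing_paren \<Omega> b f \<sigma> u lam \<phi> =
                pairing_brack \<Omega> b f \<sigma> u \<Lambda>' \<phi> + (LINT x:jump_set \<Omega> u|\<sigma>. \<phi> x * R x)) \<and>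
           (\<forall>x\<in>jump_set \<Omega> u.
              min (Fprim f x (ap_lower \<Omega> u x)) (Fprim f x (ap_upper \<Omega> u x))
                \<le> Fprim f x (u_interp \<Omega> u lam x) \<and>
              Fprim f x (u_interp \<Omega> u lam x)
                \<le> max (Fprim f x (ap_lower \<Omega> u x)) (Fprim f x (ap_upper \<Omega> u x))
              \<longrightarrow> R x = 0) \<and>
           (AE x in \<sigma>. x \<in> jump_set \<Omega> u \<longrightarrow> \<bar>R x\<bar> \<le> ap_upper \<Omega> u x - ap_lower \<Omega> u x)"
proof -
  obtain G where G: "G \<subseteq> \<Omega>" "AE x in \<sigma>. x \<in> G"
    and lip: "\<And>x. x \<in> G \<Longrightarrow> 1-lipschitz_on UNIV (Fprim f x)"
    by (rule lipschitz_setE) auto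
  have "brack_remainder \<Omega> f u lam \<in> borel_measurable (restrict_space borel (jump_set \<Omega> u))"
    by (rule measurable_restrict_mono[OF brack_remainder_measurable[OF lam]]) (auto simp: jump_set_def)
  moreover have "AE x in \<sigma>. x \<in> jump_set \<Omega> u \<longrightarrow>
      \<bar>brack_remainder \<Omega> f u lam x\<bar> \<le> ap_upper \<Omega> u x - ap_lower \<Omega> u x"
    using G(2)
  proof eventually_elim
    case (elim x)
    then show ?case
      using lam G(1) by (auto intro!: abs_brack_remainder_le lip simp: jump_set_def borel_01_on_def)
  qed
  ultimately show ?thesis
    using brack_weight_borel_01[OF lam] pairing_paren_eq_pairing_brack_add[OF lam]
      brack_remainder_eq_0[of f _ \<Omega> u lam]
    by blast
qed

end

theorem proposition4p10:
  fixes \<Omega> :: "'a::euclidean_space set"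
    and b :: "'a \<Rightarrow> real \<Rightarrow> 'a"
    and f :: "'a \<Rightarrow> real \<Rightarrow> real"
    and \<sigma> :: "'a measure"
    and u :: "'a \<Rightarrow> real"
  assumes dim: "DIM('a) \<ge> 2"
    and open_\<Omega>: "open \<Omega>"
    \<comment> \<open>(b1)\<close>
    and b1_borel: "(\<lambda>(x, t). b x t) \<in> borel_measurable (restrict_space borel (\<Omega> \<times> (UNIV::real set)))"
    and b1_bounded: "\<exists>M. \<forall>x\<in>\<Omega>. \<forall>t. norm (b x t) \<le> M"
    \<comment> \<open>(b2)\<close>
    and b2: "AE x in lebesgue. x \<in> \<Omega> \<longrightarrow> continuous_on UNIV (b x)"
    \<comment> \<open>sigma is a finite Radon measure on Omega; f is a Borel density\<close>
    and \<sigma>_fin: "finite_measure_on \<Omega> \<sigma>"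
    and f_borel: "(\<lambda>(x, t). f x t) \<in> borel_measurable (restrict_space borel (\<Omega> \<times> (UNIV::real set)))"
    and f_int: "\<And>t. integrable \<sigma> (\<lambda>x. f x t)"
    \<comment> \<open>(b3) with div b_t = f(.,t) sigma, i.e. f(.,t) = d(div b_t)/d sigma\<close>
    and b3: "\<And>t \<phi>. test_fun \<Omega> \<phi> \<Longrightarrow>
              (LINT x:\<Omega>|lebesgue. b x t \<bullet> grad \<phi> x) = - (\<integral>x. \<phi> x * f x t \<partial>\<sigma>)"
    \<comment> \<open>(b4) sigma is the least upper bound of the measures |div b_t|\<close>
    and b4: "is_measure_lub \<Omega> ((\<lambda>t E. LINT x:E|\<sigma>. f x t) ` UNIV) \<sigma>"
    \<comment> \<open>u in BV(Omega) intersected with L^infty(Omega)\<close>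
    and u_BV: "BV_on \<Omega> u"
    and u_Linf: "Linfty_on \<Omega> u"
  shows
    "(\<forall>\<Lambda>. borel_01_on \<Omega> \<Lambda> \<longrightarrow>
        (\<exists>lam. borel_01_on \<Omega> lam \<and>
           (\<forall>\<phi>. test_fun \<Omega> \<phi> \<longrightarrow> pairing_brack \<Omega> b f \<sigma> u \<Lambda> \<phi> = pairing_paren \<Omega> b f \<sigma> u lam \<phi>)))
     \<and>
     (\<forall>lam. borel_01_on \<Omega> lam \<longrightarrow>
        (\<exists>\<Lambda>' R. borel_01_on \<Omega> \<Lambda>' \<and>
           R \<in> borel_measurable (restrict_space borel (jump_set \<Omega> u)) \<and>
           (\<forall>\<phi>. test_fun \<Omega> \<phi> \<longrightarrow>
              pairing_paren \<Omega> b f \<sigma> u lam \<phi> =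
                pairing_brack \<Omega> b f \<sigma> u \<Lambda>' \<phi> + (LINT x:jump_set \<Omega> u|\<sigma>. \<phi> x * R x)) \<and>
           (\<forall>x\<in>jump_set \<Omega> u.
              min (Fprim f x (ap_lower \<Omega> u x)) (Fprim f x (ap_upper \<Omega> u x))
                \<le> Fprim f x (u_interp \<Omega> u lam x) \<and>
              Fprim f x (u_interp \<Omega> u lam x)
                \<le> max (Fprim f x (ap_lower \<Omega> u x)) (Fprim f x (ap_upper \<Omega> u x))
              \<longrightarrow> R x = 0) \<and>
           (AE x in \<sigma>. x \<in> jump_set \<Omega> u \<longrightarrow> \<bar>R x\<bar> \<le> ap_upper \<Omega> u x - ap_lower \<Omega> u x)))"
proof -
  \<comment> \<open>The term \<open>div_Bu\<close> is common to both pairings.\<close>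
  interpret pairing_setting \<Omega> \<sigma> f u
    using open_\<Omega> \<sigma>_fin f_borel f_int b4 u_Linf by unfold_locales
  show ?thesis
    using pairing_brack_as_pairing_paren pairing_paren_as_pairing_brack by blast
qed

end
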